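(* Let $\mathcal{H}$ be a real Hilbert space, let $A_1, A_2:\mathcal{H}\to 2^{\mathcal{H}}$ be maximally monotone, let $B:\mathcal{H}\to\mathcal{H}$ be monotone and $L$-Lipschitz continuous ($L>0$), let $C:\mathcal{H}\to\mathcal{H}$ be $\beta$-cocoercive ($\beta>0$), and assume that $\mathrm{zer}(A_1+A_2+B+C)\neq\emptyset$. Let $\gamma\in\left(0,\frac{\beta}{2(1+4\beta L)}\right)$. Let $z_0,y_0,y_{-1}\in\mathcal{H}$ and define for $n\ge0$ $$x_{n+1}=J_{\gamma A_1}z_n,\qquad y_{n+1}=J_{\gamma A_2}\big(2x_{n+1}-z_n-2\gamma By_n+\gamma By_{n-1}-\gamma Cy_n\big),\qquad z_{n+1}=z_n+y_{n+1}-x_{n+1}.$$ Then: (i) $\{z_n\}$ converges weakly to a point $\bar z\in\mathcal{H}$; (ii) $\{x_n\}$ and $\{y_n\}$ converge weakly to a point $\bar x\in\mathcal{H}$; (iii) $\bar x=J_{\gamma A_1}(\bar z)\in\mathrm{zer}(A_1+A_2+B+C)$.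
   Context: $J_{\gamma A}=(\mathrm{Id}+\gamma A)^{-1}$ denotes the resolvent of a maximally monotone operator $A$. $\mathrm{zer}(T)=\{x: 0\in Tx\}$. $C$ is $\beta$-cocoercive if $\langle x-y,Cx-Cy\rangle\ge\beta\|Cx-Cy\|^2$ for all $x,y\in\mathcal{H}$. *)

theory Defs
  imports "HOL-Analysis.Analysis"
begin

definition monotone_op :: "('a::real_inner \<Rightarrow> 'a set) \<Rightarrow> bool" where
  "monotone_op A \<longleftrightarrow>
     (\<forall>x y u v. u \<in> A x \<longrightarrow> v \<in> A y \<longrightarrow> inner (x - y) (u - v) \<ge> 0)"

definition maximal_monotone :: "('a::real_inner \<Rightarrow> 'a set) \<Rightarrow> bool" where
  "maximal_monotone A \<longleftrightarrow> monotone_op A \<and>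
     (\<forall>x u. (\<forall>y v. v \<in> A y \<longrightarrow> inner (x - y) (u - v) \<ge> 0) \<longrightarrow> u \<in> A x)"

definition monotone_fun :: "('a::real_inner \<Rightarrow> 'a) \<Rightarrow> bool" where
  "monotone_fun B \<longleftrightarrow> (\<forall>x y. inner (x - y) (B x - B y) \<ge> 0)"

definition lipschitz_op :: "real \<Rightarrow> ('a::real_normed_vector \<Rightarrow> 'a) \<Rightarrow> bool" where
  "lipschitz_op L B \<longleftrightarrow> (\<forall>x y. norm (B x - B y) \<le> L * norm (x - y))"

definition cocoercive :: "real \<Rightarrow> ('a::real_inner \<Rightarrow> 'a) \<Rightarrow> bool" where
  "cocoercive \<beta> C \<longleftrightarrow> (\<forall>x y. inner (x - y) (C x - C y) \<ge> \<beta> * (norm (C x - C y))\<^sup>2)"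

text \<open>Resolvent J_{\<gamma>A} = (Id + \<gamma>A)^{-1}: J z is the (unique, for maximal monotone A and
  \<gamma> > 0) point x with z \<in> x + \<gamma> A x.\<close>
definition resolvent :: "real \<Rightarrow> ('a::real_inner \<Rightarrow> 'a set) \<Rightarrow> 'a \<Rightarrow> 'a" where
  "resolvent \<gamma> A z = (THE x. \<exists>u \<in> A x. z = x + \<gamma> *\<^sub>R u)"

definition zer :: "('a::real_vector \<Rightarrow> 'a set) \<Rightarrow> 'a set" where
  "zer T = {x. 0 \<in> T x}"

definition op_sum4 :: "('a::real_vector \<Rightarrow> 'a set) \<Rightarrow> ('a \<Rightarrow> 'a set) \<Rightarrow> ('a \<Rightarrow> 'a) \<Rightarrow> ('a \<Rightarrow> 'a)
    \<Rightarrow> 'a \<Rightarrow> 'a set" where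
  "op_sum4 A1 A2 B C x = {a + b + B x + C x | a b. a \<in> A1 x \<and> b \<in> A2 x}"

definition weakly_converges :: "(nat \<Rightarrow> 'a::real_inner) \<Rightarrow> 'a \<Rightarrow> bool" where
  "weakly_converges s l \<longleftrightarrow> (\<forall>w. ((\<lambda>n. inner (s n) w) \<longlongrightarrow> inner l w) sequentially)"

end

theory Submission
  imports Defs "HOL-Library.Diagonal_Subsequence"
begin

text \<open>
  The iteration is a Davis--Yin scheme in which the forward step on \<open>B\<close> is replaced by the
  reflected term \<open>2 B y\<^sub>n - B y\<^sub>n\<^sub>-\<^sub>1\<close>. Its fixed points are the points \<open>xb + \<gamma> ab\<close> with
  \<open>ab \<in> A1 xb\<close>, \<open>bb \<in> A2 xb\<close> and \<open>ab + bb + B xb + C xb = 0\<close>, and \<open>J\<^sub>\<gamma>\<^sub>A\<^sub>1\<close> maps them to zeros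
  of \<open>A1 + A2 + B + C\<close>. Monotonicity of \<open>A1\<close>, \<open>A2\<close>, \<open>B\<close>, cocoercivity of \<open>C\<close> and the Lipschitz
  bound on the reflected term make a Lyapunov function decrease by \<open>(1 - 4\<kappa>) \<parallel>z\<^sub>n\<^sub>+\<^sub>1 - z\<^sub>n\<parallel>\<^sup>2\<close>
  per step, where \<open>\<kappa> = \<gamma>/(2\<beta>) + 2\<gamma>L < 1/4\<close> by the step-size condition. Hence
  \<open>z\<^sub>n\<^sub>+\<^sub>1 - z\<^sub>n \<rightarrow> 0\<close> and \<open>\<parallel>z\<^sub>n - zb\<parallel>\<close> converges for every fixed point \<open>zb\<close>. Weak cluster
  points of \<open>(z\<^sub>n)\<close> are fixed points, because graphs of maximal monotone operators are closed
  under the weak-strong limits that occur, so Opial's lemma gives weak convergence of \<open>(z\<^sub>n)\<close>;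
  the claims about \<open>(x\<^sub>n)\<close> and \<open>(y\<^sub>n)\<close> follow along subsequences.

  Besides the projection theorem and Riesz representation, the argument needs weak sequential
  compactness of bounded sequences and Minty's theorem (\<open>Id + \<gamma>A\<close> is onto), which follows from
  a Debrunner--Flor type extension argument and the finite intersection property of bounded
  closed convex sets.
\<close>

section \<open>Hilbert space geometry\<close>

lemma parallelogram_law:
  fixes a b :: "'a::real_inner"
  shows "(norm (a + b))\<^sup>2 + (norm (a - b))\<^sup>2 = 2 * (norm a)\<^sup>2 + 2 * (norm b)\<^sup>2"
  by (simp add: power2_norm_eq_inner inner_diff_left inner_diff_right inner_add_left inner_add_right
      inner_commute)

lemma convex_norm_sq_dist_le:
  fixes S :: "'a::real_inner set"
  assumes "convex S" "x \<in> S" "y \<in> S" "\<And>v. v \<in> S \<Longrightarrow> \<delta> \<le> norm v" "0 \<le> \<delta>"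
    and "norm x \<le> \<rho>" "norm y \<le> \<rho>"
  shows "(norm (x - y))\<^sup>2 \<le> 4 * (\<rho>\<^sup>2 - \<delta>\<^sup>2)"
proof -
  have "(1/2) *\<^sub>R x + (1/2) *\<^sub>R y \<in> S"
    using assms(1-3) by (simp add: convexD)
  then have "2 * \<delta> \<le> norm (x + y)"
    using assms(4) by (fastforce simp: scaleR_add_right[symmetric])
  then have "4 * \<delta>\<^sup>2 \<le> (norm (x + y))\<^sup>2"
    using power_mono[of "2 * \<delta>" "norm (x + y)" 2] \<open>0 \<le> \<delta>\<close> by (simp add: power_mult_distrib)
  moreover have "(norm x)\<^sup>2 \<le> \<rho>\<^sup>2" "(norm y)\<^sup>2 \<le> \<rho>\<^sup>2"
    using assms(6,7) by (simp_all add: power_mono)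
  ultimately show ?thesis
    using parallelogram_law[of x y] unfolding right_diff_distrib by linarith
qed

lemma Cauchy_if_norm_sq_diff_le:
  fixes x :: "nat \<Rightarrow> 'a::real_normed_vector"
  assumes le: "\<And>n m. n \<le> m \<Longrightarrow> (norm (x n - x m))\<^sup>2 \<le> g n" and g: "g \<longlonglongrightarrow> 0"
  shows "Cauchy x"
proof (rule CauchyI)
  fix e :: real
  assume "0 < e"
  then obtain N where N: "\<And>n. n \<ge> N \<Longrightarrow> g n < e\<^sup>2"
    using order_tendstoD(2)[OF g, of "e\<^sup>2"] by (auto simp: eventually_sequentially)
  have "norm (x m - x n) < e" if "m \<ge> N" "n \<ge> N" for m n
  proof -
    have "(norm (x m - x n))\<^sup>2 < e\<^sup>2"
      using le[of m n] le[of n m] N[OF that(1)] N[OF that(2)]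
      by (cases "m \<le> n") (auto simp: norm_minus_commute)
    then show ?thesis
      using \<open>0 < e\<close> by (simp add: power_less_imp_less_base)
  qed
  then show "\<exists>N. \<forall>m\<ge>N. \<forall>n\<ge>N. norm (x m - x n) < e"
    by blast
qed

lemma tendsto_zero_if_norm_sq_le:
  fixes u :: "nat \<Rightarrow> 'a::real_normed_vector"
  assumes "\<And>n. (norm (u n))\<^sup>2 \<le> g n" "g \<longlonglongrightarrow> 0"
  shows "u \<longlonglongrightarrow> 0"
proof (rule Lim_null_comparison)
  show "\<forall>\<^sub>F n in sequentially. norm (u n) \<le> sqrt (g n)"
    using assms(1) by (intro always_eventually allI real_le_rsqrt)
  show "(\<lambda>n. sqrt (g n)) \<longlonglongrightarrow> 0"
    using tendsto_real_sqrt[OF assms(2)] by simp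
qed

lemma min_norm_point_exists:
  fixes S :: "'a::{real_inner,complete_space} set"
  assumes "closed S" "convex S" "S \<noteq> {}"
  shows "\<exists>x\<in>S. \<forall>y\<in>S. norm x \<le> norm y"
proof -
  define \<delta> where "\<delta> = Inf (norm ` S)"
  have bdd: "bdd_below (norm ` S)"
    by (auto intro: bdd_belowI[of _ 0])
  have low: "\<delta> \<le> norm y" if "y \<in> S" for y
    unfolding \<delta>_def using that bdd by (auto intro: cInf_lower)
  have "0 \<le> \<delta>"
    unfolding \<delta>_def using assms(3) by (auto intro: cInf_greatest)
  define \<rho> where "\<rho> n = \<delta> + 1 / Suc n" for n
  have "\<exists>x\<in>S. norm x < \<rho> n" for n
    using cInf_less_iff[of "norm ` S" "\<rho> n"] bdd assms(3) unfolding \<rho>_def \<delta>_def by auto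
  then obtain x where xS: "\<And>n. x n \<in> S" and x: "\<And>n. norm (x n) < \<rho> n"
    by metis
  have \<rho>: "\<rho> \<longlonglongrightarrow> \<delta>"
    unfolding \<rho>_def using tendsto_add[OF tendsto_const LIMSEQ_inverse_real_of_nat, of \<delta>]
    by (simp add: inverse_eq_divide)
  have "Cauchy x"
  proof (rule Cauchy_if_norm_sq_diff_le)
    fix n m :: nat
    assume "n \<le> m"
    then have "\<rho> m \<le> \<rho> n"
      unfolding \<rho>_def by (simp add: frac_le)
    then show "(norm (x n - x m))\<^sup>2 \<le> 4 * ((\<rho> n)\<^sup>2 - \<delta>\<^sup>2)"
      using x[of n] x[of m] by (intro convex_norm_sq_dist_le[OF assms(2) xS xS low \<open>0 \<le> \<delta>\<close>]) auto
  next
    show "(\<lambda>n. 4 * ((\<rho> n)\<^sup>2 - \<delta>\<^sup>2)) \<longlonglongrightarrow> 0"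
      using \<rho> by (auto intro!: tendsto_eq_intros)
  qed
  then obtain l where l: "x \<longlonglongrightarrow> l"
    using Cauchy_convergent convergent_def by blast
  have "l \<in> S"
    using closed_sequentially[OF assms(1)] xS l by blast
  moreover have "norm l \<le> \<delta>"
    using tendsto_norm[OF l] \<rho> x by (intro LIMSEQ_le) (auto intro: less_imp_le)
  ultimately show ?thesis
    using low by force
qed

lemma nearest_point_exists:
  fixes S :: "'a::{real_inner,complete_space} set"
  assumes "closed S" "convex S" "S \<noteq> {}"
  shows "\<exists>x\<in>S. \<forall>y\<in>S. dist a x \<le> dist a y"
proof -
  have "closed ((+) a ` uminus ` S)" "convex ((+) a ` uminus ` S)" "(+) a ` uminus ` S \<noteq> {}"
    using assms by (auto intro: closed_translation closed_negations convex_translation convex_negations)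
  from min_norm_point_exists[OF this] show ?thesis
    by (auto simp: dist_norm)
qed

lemma orthogonal_projection_exists:
  fixes N :: "'a::{real_inner,complete_space} set"
  assumes "subspace N" "closed N"
  shows "\<exists>v\<in>N. \<forall>u\<in>N. inner (w - v) u = 0"
proof -
  have "convex N"
    using assms(1) by (rule subspace_imp_convex)
  moreover have "N \<noteq> {}"
    using subspace_0[OF assms(1)] by blast
  ultimately obtain v where v: "v \<in> N" "\<forall>y\<in>N. dist w v \<le> dist w y"
    using nearest_point_exists[OF assms(2)] by blast
  have "inner (w - v) u = 0" if "u \<in> N" for u
  proof -
    have "v + u \<in> N" "v - u \<in> N"
      using assms(1) v(1) that by (auto intro: subspace_add subspace_diff)
    then have "inner (w - v) ((v + u) - v) \<le> 0" "inner (w - v) ((v - u) - v) \<le> 0"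
      using any_closest_point_dot[OF \<open>convex N\<close> assms(2) v(1) _ v(2)] by blast+
    then show ?thesis
      by simp
  qed
  with v(1) show ?thesis
    by blast
qed

theorem Riesz_representation:
  fixes f :: "'a::{real_inner,complete_space} \<Rightarrow> real"
  assumes "bounded_linear f"
  shows "\<exists>l. \<forall>x. f x = inner l x"
proof (cases "\<forall>x. f x = 0")
  case True
  then show ?thesis
    by (intro exI[of _ 0]) simp
next
  case False
  then obtain w where w: "f w \<noteq> 0"
    by blast
  interpret f: bounded_linear f
    by (rule assms)
  have "subspace {x. f x = 0}"
    by (simp add: subspace_def f.add f.scale)
  moreover have "closed {x. f x = 0}"
    by (intro closed_Collect_eq continuous_on_const f.continuous_on continuous_on_id)
  ultimately obtain v where v: "f v = 0" "\<And>u. f u = 0 \<Longrightarrow> inner (w - v) u = 0"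
    using orthogonal_projection_exists[of "{x. f x = 0}" w] by blast
  define e where "e = w - v"
  have fe: "f e = f w"
    unfolding e_def using v(1) by (simp add: f.diff)
  then have "e \<noteq> 0"
    using w by auto
  have "f x = inner ((f e / inner e e) *\<^sub>R e) x" for x
  proof -
    have "f (x - (f x / f e) *\<^sub>R e) = 0"
      using fe w by (simp add: f.diff f.scale)
    then have "inner e (x - (f x / f e) *\<^sub>R e) = 0"
      using v(2) unfolding e_def by blast
    then have "inner e x = (f x / f e) * inner e e"
      by (simp add: inner_diff_right)
    then show ?thesis
      using fe w \<open>e \<noteq> 0\<close> by (simp add: inner_commute)
  qed
  then show ?thesis
    by blast
qed

lemma inner_diff_add_eq_norm_sq:
  fixes x a p :: "'a::real_inner"
  shows "inner (x - a) (x + p) = (norm (x - (1/2) *\<^sub>R (a - p)))\<^sup>2 - (norm ((1/2) *\<^sub>R (a + p)))\<^sup>2"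
  unfolding power2_norm_eq_inner
  by (simp add: inner_diff_left inner_diff_right inner_add_left inner_add_right
      inner_commute algebra_simps)

lemma norm_le_norm_add_if_inner_nonneg:
  fixes q r :: "'a::real_inner"
  assumes "0 \<le> inner q r"
  shows "norm q \<le> norm (q + r)" "norm r \<le> norm (q + r)"
proof -
  have "(norm (q + r))\<^sup>2 = (norm q)\<^sup>2 + 2 * inner q r + (norm r)\<^sup>2"
    unfolding power2_norm_eq_inner by (simp add: inner_add_left inner_add_right inner_commute)
  then have "(norm q)\<^sup>2 \<le> (norm (q + r))\<^sup>2" "(norm r)\<^sup>2 \<le> (norm (q + r))\<^sup>2"
    using assms by simp_all
  then show "norm q \<le> norm (q + r)" "norm r \<le> norm (q + r)"
    by (simp_all add: power2_le_iff_abs_le)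
qed

lemma norm_sq_add_le_if_inner_nonneg:
  fixes u d g :: "'a::real_inner"
  assumes "0 \<le> inner u g"
  shows "(norm (u + d))\<^sup>2 \<le> (norm (u + d + g))\<^sup>2 + (norm d)\<^sup>2"
proof -
  have "(norm (u + d + g))\<^sup>2 = (norm (u + d))\<^sup>2 + 2 * inner u g + (norm (d + g))\<^sup>2 - (norm d)\<^sup>2"
    unfolding power2_norm_eq_inner by (simp add: inner_add_left inner_add_right inner_commute)
  then show ?thesis
    using assms by simp
qed

lemma tendsto_inner_zero_bounded:
  fixes a b :: "nat \<Rightarrow> 'a::real_inner"
  assumes "a \<longlonglongrightarrow> 0" "bounded (range b)"
  shows "(\<lambda>k. inner (a k) (b k)) \<longlonglongrightarrow> 0"
  using bounded_bilinear.Zfun_prod_Bfun[OF bounded_bilinear_inner, of a sequentially b] assms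
  by (simp add: tendsto_Zfun_iff Bseq_eq_bounded)

section \<open>Weak convergence\<close>

lemma weakly_converges_unique:
  assumes "weakly_converges s l" "weakly_converges s l'"
  shows "l = l'"
proof -
  have "inner l (l - l') = inner l' (l - l')"
    using assms unfolding weakly_converges_def by (blast intro: LIMSEQ_unique)
  then have "inner (l - l') (l - l') = 0"
    by (simp add: inner_diff_left)
  then show ?thesis
    by simp
qed

lemma weakly_converges_add:
  "weakly_converges s a \<Longrightarrow> weakly_converges t b \<Longrightarrow> weakly_converges (\<lambda>n. s n + t n) (a + b)"
  unfolding weakly_converges_def by (auto simp: inner_add_left intro: tendsto_add)

lemma weakly_converges_scaleR:
  "weakly_converges s a \<Longrightarrow> weakly_converges (\<lambda>n. c *\<^sub>R s n) (c *\<^sub>R a)"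
  unfolding weakly_converges_def by (auto intro: tendsto_mult_left)

lemma tendsto_imp_weakly_converges: "s \<longlonglongrightarrow> l \<Longrightarrow> weakly_converges s l"
  unfolding weakly_converges_def by (auto intro: tendsto_inner tendsto_const)

lemma weakly_converges_diff_tendsto_zero:
  assumes "weakly_converges s l" "(\<lambda>n. t n - s n) \<longlonglongrightarrow> 0"
  shows "weakly_converges t l"
  using weakly_converges_add[OF assms(1) tendsto_imp_weakly_converges[OF assms(2)]] by simp

lemma weakly_converges_subseq:
  assumes "weakly_converges s l" "strict_mono r"
  shows "weakly_converges (s \<circ> r) l"
  unfolding weakly_converges_def
proof
  fix w
  show "(\<lambda>n. inner ((s \<circ> r) n) w) \<longlonglongrightarrow> inner l w"
    using LIMSEQ_subseq_LIMSEQ[OF _ assms(2), of "\<lambda>n. inner (s n) w"] assms(1)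
    unfolding weakly_converges_def by (simp add: o_def)
qed

lemma weakly_converges_Suc: "weakly_converges (\<lambda>n. s (Suc n)) l \<Longrightarrow> weakly_converges s l"
  unfolding weakly_converges_def by (auto intro: LIMSEQ_imp_Suc)

lemma weakly_converges_if_subseqs:
  assumes "\<And>r::nat \<Rightarrow> nat. strict_mono r \<Longrightarrow> \<exists>r'. strict_mono r' \<and> weakly_converges (s \<circ> r \<circ> r') l"
  shows "weakly_converges s l"
  unfolding weakly_converges_def
proof (rule allI, rule ccontr)
  fix w
  assume "\<not> (\<lambda>n. inner (s n) w) \<longlonglongrightarrow> inner l w"
  then obtain e where "e > 0" and "\<forall>N. \<exists>n\<ge>N. \<not> dist (inner (s n) w) (inner l w) < e"
    unfolding LIMSEQ_def by blast
  then have "infinite {n. \<not> dist (inner (s n) w) (inner l w) < e}"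
    unfolding infinite_nat_iff_unbounded_le by blast
  from infinite_enumerate[OF this] obtain r :: "nat \<Rightarrow> nat"
    where r: "strict_mono r" "\<And>n. \<not> dist (inner (s (r n)) w) (inner l w) < e"
    by blast
  obtain r' where "weakly_converges (s \<circ> r \<circ> r') l"
    using assms[OF r(1)] by blast
  then have "(\<lambda>k. inner (s (r (r' k))) w) \<longlonglongrightarrow> inner l w"
    unfolding weakly_converges_def by simp
  then obtain k where "dist (inner (s (r (r' k))) w) (inner l w) < e"
    using \<open>e > 0\<close> unfolding LIMSEQ_def by blast
  with r(2) show False
    by blast
qed

lemma bounded_range_inner_left:
  "bounded (range t) \<Longrightarrow> bounded (range (\<lambda>k. inner (t k) w))"
  using bounded_linear_image[OF _ bounded_linear_inner_left, of "range t" w]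
  by (simp add: image_image)

lemma bounded_inner_convergent_subseq:
  fixes s :: "nat \<Rightarrow> 'a::real_inner"
  assumes "bounded (range s)"
  shows "\<exists>r. strict_mono r \<and> (\<forall>m. convergent (\<lambda>k. inner (s (r k)) (s m)))"
proof -
  define P where "P m \<sigma> \<longleftrightarrow> convergent (\<lambda>k. inner (s (\<sigma> k)) (s m))" for m and \<sigma> :: "nat \<Rightarrow> nat"
  interpret diag: subseqs P
  proof
    fix m and \<sigma> :: "nat \<Rightarrow> nat"
    have "bounded (range ((\<lambda>k. inner (s k) (s m)) \<circ> \<sigma>))"
      using bounded_range_inner_left[OF assms, of "s m"] by (rule bounded_subset) auto
    then obtain r l where "strict_mono r" "((\<lambda>k. inner (s k) (s m)) \<circ> \<sigma> \<circ> r) \<longlonglongrightarrow> l"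
      using bounded_imp_convergent_subsequence by blast
    then show "\<exists>r. strict_mono r \<and> P m (\<sigma> \<circ> r)"
      unfolding P_def convergent_def by (auto simp: o_def)
  qed
  have stable: "P m (\<sigma> \<circ> r)" if "strict_mono r" "P m \<sigma>" for m \<sigma> r
    using convergent_subseq_convergent[OF that(2)[unfolded P_def] that(1)]
    unfolding P_def by (simp add: o_def)
  have "convergent (\<lambda>k. inner (s (diag.diagseq k)) (s m))" for m
  proof -
    have "P m (diag.diagseq \<circ> (+) (Suc m))"
      using diag.diagseq_holds[of m] stable by blast
    then show ?thesis
      unfolding P_def o_def by (subst convergent_ignore_initial_segment[of _ "Suc m", symmetric])
        (simp add: add.commute)
  qed
  then show ?thesis
    using diag.subseq_diagseq by blast
qed

lemma inner_convergent_subspace: "subspace {w. convergent (\<lambda>k. inner (t k) w)}"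
proof -
  have "convergent (\<lambda>k. inner (t k) (c *\<^sub>R w))" if "convergent (\<lambda>k. inner (t k) w)" for c w
    using that unfolding convergent_def by (auto intro: tendsto_mult_left)
  then show ?thesis
    unfolding subspace_def by (auto simp: inner_add_right intro: convergent_add convergent_const)
qed

lemma inner_convergent_closed:
  assumes "bounded (range t)"
  shows "closed {w. convergent (\<lambda>k. inner (t k) w)}"
proof (rule closed_sequential_limits[THEN iffD2], intro allI impI, elim conjE)
  fix v :: "nat \<Rightarrow> 'a" and w
  assume v: "\<forall>j. v j \<in> {w. convergent (\<lambda>k. inner (t k) w)}" and "v \<longlonglongrightarrow> w"
  obtain M where "M > 0" and M: "\<And>k. norm (t k) \<le> M"
    using assms by (auto simp: bounded_pos)
  have "Cauchy (\<lambda>k. inner (t k) w)"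
  proof (rule CauchyI)
    fix e :: real
    assume "0 < e"
    then obtain j where j: "norm (v j - w) < e / (4 * M)"
      using LIMSEQ_D[OF \<open>v \<longlonglongrightarrow> w\<close>, of "e / (4 * M)"] \<open>M > 0\<close> by auto
    have "Cauchy (\<lambda>k. inner (t k) (v j))"
      using v by (simp add: Cauchy_convergent_iff)
    then obtain N where N: "\<And>m n. m \<ge> N \<Longrightarrow> n \<ge> N \<Longrightarrow> norm (inner (t m) (v j) - inner (t n) (v j)) < e / 2"
      using CauchyD[of _ "e / 2"] \<open>0 < e\<close> by (metis half_gt_zero)
    have "norm (inner (t m) w - inner (t n) w) < e" if "m \<ge> N" "n \<ge> N" for m n
    proof -
      have "\<bar>inner (t m - t n) (w - v j)\<bar> \<le> norm (t m - t n) * norm (w - v j)"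
        by (rule Cauchy_Schwarz_ineq2)
      also have "\<dots> \<le> (2 * M) * (e / (4 * M))"
        using norm_triangle_ineq4[of "t m" "t n"] M[of m] M[of n] j \<open>M > 0\<close>
        by (intro mult_mono) (auto simp: norm_minus_commute)
      also have "\<dots> = e / 2"
        using \<open>M > 0\<close> by simp
      finally have "\<bar>inner (t m - t n) (w - v j)\<bar> \<le> e / 2" .
      moreover have "inner (t m) w - inner (t n) w
          = (inner (t m) (v j) - inner (t n) (v j)) + inner (t m - t n) (w - v j)"
        by (simp add: inner_diff_left inner_diff_right)
      ultimately show ?thesis
        using N[OF that] unfolding real_norm_def by linarith
    qed
    then show "\<exists>N. \<forall>m\<ge>N. \<forall>n\<ge>N. norm (inner (t m) w - inner (t n) w) < e"
      by blast
  qed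
  then show "w \<in> {w. convergent (\<lambda>k. inner (t k) w)}"
    by (simp add: Cauchy_convergent_iff)
qed

lemma weakly_convergent_if_inner_convergent:
  fixes t :: "nat \<Rightarrow> 'a::{real_inner,complete_space}"
  assumes "bounded (range t)" "\<And>w. convergent (\<lambda>k. inner (t k) w)"
  shows "\<exists>l. weakly_converges t l"
proof -
  define f where "f w = lim (\<lambda>k. inner (t k) w)" for w
  have f: "(\<lambda>k. inner (t k) w) \<longlonglongrightarrow> f w" for w
    using assms(2) unfolding f_def convergent_LIMSEQ_iff .
  obtain M where M: "\<And>k. norm (t k) \<le> M"
    using assms(1) by (auto simp: bounded_iff)
  have "bounded_linear f"
  proof
    show "f (x + y) = f x + f y" for x y
      using f[of "x + y"] tendsto_add[OF f f] by (simp add: inner_add_right LIMSEQ_unique)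
    show "f (c *\<^sub>R x) = c *\<^sub>R f x" for c x
      using f[of "c *\<^sub>R x"] tendsto_mult_left[OF f] by (simp add: LIMSEQ_unique)
    have "norm (f x) \<le> norm x * M" for x
    proof (rule LIMSEQ_le_const2[OF tendsto_norm[OF f]])
      have "norm (inner (t k) x) \<le> norm x * M" for k
        using Cauchy_Schwarz_ineq2[of "t k" x] mult_right_mono[OF M[of k] norm_ge_zero[of x]]
        by (simp add: mult.commute)
      then show "\<exists>N. \<forall>k\<ge>N. norm (inner (t k) x) \<le> norm x * M"
        by blast
    qed
    then show "\<exists>K. \<forall>x. norm (f x) \<le> norm x * K"
      by blast
  qed
  then obtain l where "\<And>w. f w = inner l w"
    using Riesz_representation by blast
  then have "weakly_converges t l"
    unfolding weakly_converges_def using f by simp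
  then show ?thesis
    by blast
qed

theorem bounded_imp_weakly_convergent_subseq:
  fixes s :: "nat \<Rightarrow> 'a::{real_inner,complete_space}"
  assumes "bounded (range s)"
  shows "\<exists>r l. strict_mono r \<and> weakly_converges (s \<circ> r) l"
proof -
  obtain r where r: "strict_mono r" "\<And>m. convergent (\<lambda>k. inner (s (r k)) (s m))"
    using bounded_inner_convergent_subseq[OF assms] by blast
  define W where "W = {w. convergent (\<lambda>k. inner ((s \<circ> r) k) w)}"
  have bdd: "bounded (range (s \<circ> r))"
    using assms by (rule bounded_subset) auto
  have "subspace W" "closed W"
    unfolding W_def by (rule inner_convergent_subspace, rule inner_convergent_closed[OF bdd])
  have "convergent (\<lambda>k. inner ((s \<circ> r) k) w)" for w
  proof -
    obtain v where "v \<in> W" and v: "\<And>u. u \<in> W \<Longrightarrow> inner (w - v) u = 0"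
      using orthogonal_projection_exists[OF \<open>subspace W\<close> \<open>closed W\<close>] by blast
    have "inner (w - v) ((s \<circ> r) k) = 0" for k
      using r(2) by (intro v) (simp add: W_def)
    then have "inner ((s \<circ> r) k) w = inner ((s \<circ> r) k) v" for k
      by (simp add: inner_diff_left inner_commute)
    then show ?thesis
      using \<open>v \<in> W\<close> unfolding W_def by simp
  qed
  then obtain l where "weakly_converges (s \<circ> r) l"
    using weakly_convergent_if_inner_convergent[OF bdd] by blast
  with r(1) show ?thesis
    by blast
qed

lemma bounded_imp_weakly_convergent_subseq2:
  fixes s t :: "nat \<Rightarrow> 'a::{real_inner,complete_space}"
  assumes "bounded (range s)" "bounded (range t)"
  shows "\<exists>R a b. strict_mono R \<and> weakly_converges (s \<circ> R) a \<and> weakly_converges (t \<circ> R) b"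
proof -
  obtain R1 a where R1: "strict_mono R1" "weakly_converges (s \<circ> R1) a"
    using bounded_imp_weakly_convergent_subseq[OF assms(1)] by blast
  have "bounded (range (t \<circ> R1))"
    using assms(2) by (rule bounded_subset) auto
  then obtain R2 b where R2: "strict_mono R2" "weakly_converges (t \<circ> R1 \<circ> R2) b"
    using bounded_imp_weakly_convergent_subseq by blast
  have "strict_mono (R1 \<circ> R2)"
    using R1(1) R2(1) by (rule strict_mono_o)
  moreover have "weakly_converges (s \<circ> (R1 \<circ> R2)) a"
    using weakly_converges_subseq[OF R1(2) R2(1)] by (simp add: o_assoc)
  moreover have "weakly_converges (t \<circ> (R1 \<circ> R2)) b"
    using R2(2) by (simp add: o_assoc)
  ultimately show ?thesis
    by blast
qed

lemma weak_cluster_points_eq: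
  assumes "convergent (\<lambda>k. norm (z k - p))" "convergent (\<lambda>k. norm (z k - q))"
    and "strict_mono r" "weakly_converges (z \<circ> r) p"
    and "strict_mono r'" "weakly_converges (z \<circ> r') q"
  shows "p = q"
proof -
  have eq: "inner (z k) (p - q) = ((norm (z k - q))\<^sup>2 - (norm (z k - p))\<^sup>2 - (norm q)\<^sup>2 + (norm p)\<^sup>2) / 2" for k
    by (simp add: power2_norm_eq_inner inner_diff_left inner_diff_right inner_commute algebra_simps)
  obtain a b where "(\<lambda>k. norm (z k - p)) \<longlonglongrightarrow> a" "(\<lambda>k. norm (z k - q)) \<longlonglongrightarrow> b"
    using assms(1,2) unfolding convergent_def by blast
  then have "(\<lambda>k. inner (z k) (p - q)) \<longlonglongrightarrow> (b\<^sup>2 - a\<^sup>2 - (norm q)\<^sup>2 + (norm p)\<^sup>2) / 2"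
    unfolding eq by (intro tendsto_intros) simp_all
  then obtain c where lim: "(\<lambda>k. inner (z k) (p - q)) \<longlonglongrightarrow> c"
    by blast
  have "(\<lambda>k. inner ((z \<circ> r) k) (p - q)) \<longlonglongrightarrow> inner p (p - q)"
    "(\<lambda>k. inner ((z \<circ> r') k) (p - q)) \<longlonglongrightarrow> inner q (p - q)"
    using assms(4,6) unfolding weakly_converges_def by blast+
  moreover have "(\<lambda>k. inner ((z \<circ> r) k) (p - q)) \<longlonglongrightarrow> c" "(\<lambda>k. inner ((z \<circ> r') k) (p - q)) \<longlonglongrightarrow> c"
    using LIMSEQ_subseq_LIMSEQ[OF lim assms(3)] LIMSEQ_subseq_LIMSEQ[OF lim assms(5)]
    by (simp_all add: o_def)
  ultimately have "inner p (p - q) = inner q (p - q)"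
    using LIMSEQ_unique by metis
  then have "inner (p - q) (p - q) = 0"
    by (simp add: inner_diff_left)
  then show ?thesis
    by simp
qed

theorem Opial_weak_convergence:
  fixes z :: "nat \<Rightarrow> 'a::{real_inner,complete_space}"
  assumes "bounded (range z)"
    and "\<And>p. p \<in> F \<Longrightarrow> convergent (\<lambda>k. norm (z k - p))"
    and "\<And>r p. strict_mono r \<Longrightarrow> weakly_converges (z \<circ> r) p \<Longrightarrow> p \<in> F"
  shows "\<exists>p\<in>F. weakly_converges z p"
proof -
  obtain r p where r: "strict_mono r" "weakly_converges (z \<circ> r) p"
    using bounded_imp_weakly_convergent_subseq[OF assms(1)] by blast
  then have "p \<in> F"
    by (rule assms(3))
  have "weakly_converges z p"
  proof (rule weakly_converges_if_subseqs)
    fix r' :: "nat \<Rightarrow> nat"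
    assume "strict_mono r'"
    have "bounded (range (z \<circ> r'))"
      using assms(1) by (rule bounded_subset) auto
    then obtain r'' q where r'': "strict_mono r''" "weakly_converges (z \<circ> r' \<circ> r'') q"
      using bounded_imp_weakly_convergent_subseq by blast
    have mono: "strict_mono (r' \<circ> r'')"
      using \<open>strict_mono r'\<close> r''(1) by (rule strict_mono_o)
    moreover have q: "weakly_converges (z \<circ> (r' \<circ> r'')) q"
      using r''(2) by (simp add: o_assoc)
    ultimately have "q \<in> F"
      by (rule assms(3))
    then have "q = p"
      using weak_cluster_points_eq[OF assms(2) assms(2) mono q r] \<open>p \<in> F\<close> by blast
    with r'' show "\<exists>r''. strict_mono r'' \<and> weakly_converges (z \<circ> r' \<circ> r'') p"
      by blast
  qed
  with \<open>p \<in> F\<close> show ?thesis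
    by blast
qed

section \<open>Minty's theorem\<close>

lemma maximal_monotone_imp_monotone_op: "maximal_monotone A \<Longrightarrow> monotone_op A"
  unfolding maximal_monotone_def by blast

lemma monotone_opD: "monotone_op A \<Longrightarrow> u \<in> A x \<Longrightarrow> v \<in> A y \<Longrightarrow> 0 \<le> inner (x - y) (u - v)"
  unfolding monotone_op_def by blast

lemma maximal_monotone_memI:
  "maximal_monotone A \<Longrightarrow> (\<And>y v. v \<in> A y \<Longrightarrow> 0 \<le> inner (x - y) (u - v)) \<Longrightarrow> u \<in> A x"
  unfolding maximal_monotone_def by blast

lemma in_convex_hull_linear_image_finite:
  fixes c :: "'b::real_vector \<Rightarrow> 'a::real_vector"
  assumes "linear c" "finite I" "x \<in> convex hull (c ` I)"
  shows "\<exists>\<mu>. (\<forall>i\<in>I. 0 \<le> \<mu> i) \<and> sum \<mu> I = 1 \<and> x = (\<Sum>i\<in>I. \<mu> i *\<^sub>R c i)"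
proof -
  obtain q where "q \<in> convex hull I" "x = c q"
    using assms(1,3) by (auto simp: convex_hull_linear_image[symmetric])
  then obtain \<mu> where "\<forall>i\<in>I. 0 \<le> \<mu> i" "sum \<mu> I = 1" "x = c (\<Sum>i\<in>I. \<mu> i *\<^sub>R i)"
    using convex_hull_finite[OF assms(2)] by auto
  then show ?thesis
    using assms(1) by (auto simp: real_vector.linear_sum linear_cmul)
qed

lemma double_sum_inner_diff:
  fixes a p :: "'b \<Rightarrow> 'a::real_inner"
  assumes "sum \<mu> I = 1"
  shows "(\<Sum>i\<in>I. \<Sum>j\<in>I. \<mu> i * \<mu> j * inner (a i - a j) (p i - p j))
    = 2 * (\<Sum>i\<in>I. \<mu> i * inner (a i) (p i)) - 2 * inner (\<Sum>i\<in>I. \<mu> i *\<^sub>R a i) (\<Sum>i\<in>I. \<mu> i *\<^sub>R p i)"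
  using assms
  apply (simp add: inner_diff_left inner_diff_right algebra_simps sum_subtractf sum.distrib
      inner_sum_left inner_sum_right sum_distrib_left[symmetric] sum_distrib_right[symmetric])
  apply (simp add: sum_distrib_left)
  apply (subst sum.swap)
  apply (simp add: mult_ac)
  done

lemma monotone_convex_combination_nonpos:
  fixes a p :: "'b \<Rightarrow> 'a::real_inner"
  assumes "\<forall>i\<in>I. 0 \<le> \<mu> i" "sum \<mu> I = 1"
    and "\<And>i j. i \<in> I \<Longrightarrow> j \<in> I \<Longrightarrow> 0 \<le> inner (a i - a j) (p i - p j)"
    and "x = (\<Sum>i\<in>I. \<mu> i *\<^sub>R ((1/2) *\<^sub>R (a i - p i)))"
  shows "(\<Sum>i\<in>I. \<mu> i * inner (x - a i) (x + p i)) \<le> 0"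
proof -
  define A where "A = (\<Sum>i\<in>I. \<mu> i *\<^sub>R a i)"
  define P where "P = (\<Sum>i\<in>I. \<mu> i *\<^sub>R p i)"
  have x: "x = (1/2) *\<^sub>R (A - P)"
    unfolding assms(4) A_def P_def
    by (simp add: scaleR_sum_right sum_subtractf[symmetric] scaleR_right_diff_distrib)
  have "(\<Sum>i\<in>I. \<mu> i * inner (x - a i) (x + p i))
      = inner x x + inner x P - inner A x - (\<Sum>i\<in>I. \<mu> i * inner (a i) (p i))"
    using assms(2) unfolding A_def P_def
    by (simp add: inner_diff_left inner_add_right right_diff_distrib distrib_left sum.distrib
        sum_subtractf inner_sum_left inner_sum_right sum_distrib_right[symmetric])
  also have "\<dots> = - (1/4) * inner (A + P) (A + P) + inner A P - (\<Sum>i\<in>I. \<mu> i * inner (a i) (p i))"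
    unfolding x by (simp add: inner_add_left inner_add_right inner_diff_left inner_diff_right
        inner_commute[of P A] algebra_simps)
  also have "\<dots> \<le> 0"
  proof -
    have "0 \<le> (\<Sum>i\<in>I. \<Sum>j\<in>I. \<mu> i * \<mu> j * inner (a i - a j) (p i - p j))"
      using assms(1,3) by (intro sum_nonneg mult_nonneg_nonneg) auto
    then have "inner A P \<le> (\<Sum>i\<in>I. \<mu> i * inner (a i) (p i))"
      unfolding double_sum_inner_diff[OF assms(2)] A_def P_def by linarith
    then show ?thesis
      using inner_ge_zero[of "A + P"] by linarith
  qed
  finally show ?thesis .
qed

lemma norm_sq_decrease_towards_nearest:
  fixes x q c :: "'a::real_inner"
  assumes "inner (x - q) (c - q) \<le> 0" "x \<noteq> q" "0 < t" "t < 1"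
  shows "(norm (x + t *\<^sub>R (q - x) - c))\<^sup>2 < (norm (x - c))\<^sup>2"
proof -
  define v where "v = q - x"
  have "0 < inner v v"
    using assms(2) unfolding v_def by simp
  have "inner (x - c) v = - inner v v + inner (x - q) (c - q)"
    unfolding v_def by (simp add: inner_diff_left inner_diff_right inner_commute algebra_simps)
  then have "inner (x - c) v \<le> - inner v v"
    using assms(1) by linarith
  then have "2 * t * inner (x - c) v \<le> 2 * t * (- inner v v)"
    using assms(3) by (intro mult_left_mono) auto
  moreover have "t * t * inner v v < 2 * t * inner v v"
    using assms(3,4) \<open>0 < inner v v\<close> by (intro mult_strict_right_mono) auto
  moreover have "(norm (x + t *\<^sub>R v - c))\<^sup>2 = (norm (x - c))\<^sup>2 + 2 * t * inner (x - c) v + t * t * inner v v"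
    by (simp add: power2_norm_eq_inner inner_diff_left inner_diff_right inner_add_left inner_add_right
        inner_commute algebra_simps)
  ultimately show ?thesis
    unfolding v_def by linarith
qed

lemma nearest_point_descent:
  fixes K :: "'a::real_inner set"
  assumes "compact K" "convex K" "K \<noteq> {}" "x \<notin> K"
  shows "\<exists>q\<in>K. \<forall>k\<in>K. \<forall>t. 0 < t \<and> t < 1 \<longrightarrow> (norm (x + t *\<^sub>R (q - x) - k))\<^sup>2 < (norm (x - k))\<^sup>2"
proof -
  have "continuous_on K (dist x)"
    using continuous_on_dist[OF continuous_on_const continuous_on_id] by simp
  then obtain q where "q \<in> K" and q: "\<And>k. k \<in> K \<Longrightarrow> dist x q \<le> dist x k"
    using continuous_attains_inf[OF assms(1,3)] by blast
  have "x \<noteq> q"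
    using \<open>q \<in> K\<close> assms(4) by blast
  have "(norm (x + t *\<^sub>R (q - x) - k))\<^sup>2 < (norm (x - k))\<^sup>2" if "k \<in> K" "0 < t" "t < 1" for k t
  proof (rule norm_sq_decrease_towards_nearest[OF _ \<open>x \<noteq> q\<close> that(2,3)])
    show "inner (x - q) (k - q) \<le> 0"
      using assms(1,2) \<open>q \<in> K\<close> q that(1) by (intro any_closest_point_dot) (auto simp: compact_imp_closed)
  qed
  with \<open>q \<in> K\<close> show ?thesis
    by blast
qed

lemma continuous_on_Max_finite:
  fixes h :: "'b \<Rightarrow> 'a::topological_space \<Rightarrow> real"
  assumes "finite G" "G \<noteq> {}" "\<And>g. g \<in> G \<Longrightarrow> continuous_on D (h g)"
  shows "continuous_on D (\<lambda>x. Max ((\<lambda>g. h g x) ` G))"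
  using assms
proof (induction G rule: finite_ne_induct)
  case (singleton g)
  then show ?case
    by simp
next
  case (insert g G)
  then show ?case
    by (simp add: continuous_on_max)
qed

lemma finite_eventually_all_less:
  fixes \<phi> :: "'b \<Rightarrow> real \<Rightarrow> real"
  assumes "finite G" "\<And>g. g \<in> G \<Longrightarrow> (\<phi> g \<longlongrightarrow> \<phi> g 0) (at_right 0)"
    and "\<And>g. g \<in> G \<Longrightarrow> \<phi> g 0 < m \<or> (\<forall>t. 0 < t \<and> t < 1 \<longrightarrow> \<phi> g t < m)"
  shows "\<exists>t. 0 < t \<and> t < 1 \<and> (\<forall>g\<in>G. \<phi> g t < m)"
proof -
  have small: "\<forall>\<^sub>F t in at_right (0::real). 0 < t \<and> t < 1"
    using eventually_at_right_real[of 0 1] by simp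
  have "\<forall>\<^sub>F t in at_right 0. \<phi> g t < m" if "g \<in> G" for g
    using assms(3)[OF that]
  proof
    assume "\<phi> g 0 < m"
    then show ?thesis
      using order_tendstoD(2)[OF assms(2)[OF that]] by blast
  next
    assume "\<forall>t. 0 < t \<and> t < 1 \<longrightarrow> \<phi> g t < m"
    then show ?thesis
      using small by (auto elim: eventually_mono)
  qed
  then have "\<forall>\<^sub>F t in at_right 0. (0 < t \<and> t < 1) \<and> (\<forall>g\<in>G. \<phi> g t < m)"
    using small assms(1) by (simp add: eventually_ball_finite_distrib eventually_conj_iff)
  then show ?thesis
    using eventually_happens[of _ "at_right (0::real)"] by (auto simp: trivial_limit_def[symmetric])
qed

lemma minimizer_of_Max_in_active_hull:
  fixes c :: "'g \<Rightarrow> 'a::real_inner" and r :: "'g \<Rightarrow> real" and G :: "'g set"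
  defines "H \<equiv> \<lambda>x. Max ((\<lambda>g. (norm (x - c g))\<^sup>2 - r g) ` G)"
  assumes "finite G" "x0 \<in> convex hull (c ` G)"
    and min: "\<And>y. y \<in> convex hull (c ` G) \<Longrightarrow> H x0 \<le> H y"
  shows "x0 \<in> convex hull (c ` {g \<in> G. (norm (x0 - c g))\<^sup>2 - r g = H x0})"
proof (rule ccontr)
  define I where "I = {g \<in> G. (norm (x0 - c g))\<^sup>2 - r g = H x0}"
  assume "x0 \<notin> convex hull (c ` {g \<in> G. (norm (x0 - c g))\<^sup>2 - r g = H x0})"
  then have "x0 \<notin> convex hull (c ` I)"
    unfolding I_def .
  have "G \<noteq> {}"
    using assms(3) by auto
  have le_H: "(norm (x - c g))\<^sup>2 - r g \<le> H x" if "g \<in> G" for g x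
    unfolding H_def using assms(2) that by simp
  have "H x0 \<in> (\<lambda>g. (norm (x0 - c g))\<^sup>2 - r g) ` G"
    unfolding H_def using assms(2) \<open>G \<noteq> {}\<close> by (intro Max_in) auto
  then have ne: "convex hull (c ` I) \<noteq> {}"
    unfolding I_def by auto
  have cpt: "compact (convex hull (c ` I))"
    unfolding I_def using assms(2) by (intro finite_imp_compact_convex_hull) auto
  obtain q where q: "q \<in> convex hull (c ` I)" and descent: "\<forall>k\<in>convex hull (c ` I). \<forall>t.
      0 < t \<and> t < 1 \<longrightarrow> (norm (x0 + t *\<^sub>R (q - x0) - k))\<^sup>2 < (norm (x0 - k))\<^sup>2"
    using nearest_point_descent[OF cpt convex_convex_hull ne \<open>x0 \<notin> convex hull (c ` I)\<close>] by blast
  obtain t where t: "0 < t" "t < 1" "\<forall>g\<in>G. (norm (x0 + t *\<^sub>R (q - x0) - c g))\<^sup>2 - r g < H x0"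
  proof (atomize_elim, rule finite_eventually_all_less[OF assms(2)])
    fix g
    show "((\<lambda>t. (norm (x0 + t *\<^sub>R (q - x0) - c g))\<^sup>2 - r g)
        \<longlongrightarrow> (norm (x0 + 0 *\<^sub>R (q - x0) - c g))\<^sup>2 - r g) (at_right 0)"
      by (intro tendsto_intros)
    assume "g \<in> G"
    then show "(norm (x0 + 0 *\<^sub>R (q - x0) - c g))\<^sup>2 - r g < H x0
        \<or> (\<forall>t. 0 < t \<and> t < 1 \<longrightarrow> (norm (x0 + t *\<^sub>R (q - x0) - c g))\<^sup>2 - r g < H x0)"
      using le_H[of g x0] descent hull_inc[of "c g" "c ` I"] unfolding I_def by force
  qed
  have "(1 - t) *\<^sub>R x0 + t *\<^sub>R q \<in> convex hull (c ` G)"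
    using assms(3) q t(1,2) hull_mono[of "c ` I" "c ` G"] unfolding I_def by (intro convexD) auto
  then have "H x0 \<le> H (x0 + t *\<^sub>R (q - x0))"
    using min by (simp add: algebra_simps)
  moreover have "H (x0 + t *\<^sub>R (q - x0)) < H x0"
    using assms(2) \<open>G \<noteq> {}\<close> t(3) by (simp add: H_def)
  ultimately show False
    by simp
qed

lemma monotone_extension_antidiagonal_finite:
  fixes G :: "('a::real_inner \<times> 'a) set"
  assumes "finite G"
    and mono: "\<And>a p b q. (a, p) \<in> G \<Longrightarrow> (b, q) \<in> G \<Longrightarrow> 0 \<le> inner (a - b) (p - q)"
  shows "\<exists>x. \<forall>(a, p)\<in>G. inner (x - a) (x + p) \<le> 0"
proof (cases "G = {}")
  case False
  \<comment> \<open>The constraint of \<open>g\<close> says that \<open>x\<close> lies in the ball with centre \<open>c g\<close> and squared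
    radius \<open>r g\<close>. A minimiser of the largest excess over the hull of the centres lies in the hull
    of the active centres, and averaging the monotonicity inequalities over them shows that the
    excess is not positive.\<close>
  define c where "c g = (1/2) *\<^sub>R (fst g - snd g)" for g :: "'a \<times> 'a"
  define r where "r g = (norm ((1/2) *\<^sub>R (fst g + snd g)))\<^sup>2" for g :: "'a \<times> 'a"
  define H where "H x = Max ((\<lambda>g. (norm (x - c g))\<^sup>2 - r g) ` G)" for x
  have h: "inner (x - fst g) (x + snd g) = (norm (x - c g))\<^sup>2 - r g" for x g
    unfolding c_def r_def by (rule inner_diff_add_eq_norm_sq)
  have "compact (convex hull (c ` G))" "convex hull (c ` G) \<noteq> {}"
    using assms(1) False by (auto intro: finite_imp_compact_convex_hull)
  moreover have "continuous_on (convex hull (c ` G)) H"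
    unfolding H_def using assms(1) False by (intro continuous_on_Max_finite continuous_intros) auto
  ultimately obtain x0 where x0: "x0 \<in> convex hull (c ` G)"
    "\<And>y. y \<in> convex hull (c ` G) \<Longrightarrow> H x0 \<le> H y"
    using continuous_attains_inf by metis
  define I where "I = {g \<in> G. (norm (x0 - c g))\<^sup>2 - r g = H x0}"
  have "x0 \<in> convex hull (c ` I)"
    using minimizer_of_Max_in_active_hull[OF assms(1) x0(1) x0(2)[unfolded H_def]]
    unfolding I_def H_def .
  moreover have "linear c"
    unfolding c_def by (auto intro!: linearI simp: algebra_simps)
  moreover have "finite I"
    using assms(1) unfolding I_def by simp
  ultimately obtain \<mu> where \<mu>: "\<forall>g\<in>I. 0 \<le> \<mu> g" "sum \<mu> I = 1" "x0 = (\<Sum>g\<in>I. \<mu> g *\<^sub>R c g)"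
    using in_convex_hull_linear_image_finite by blast
  have "(\<Sum>g\<in>I. \<mu> g * inner (x0 - fst g) (x0 + snd g)) \<le> 0"
    using \<mu> mono unfolding c_def I_def by (intro monotone_convex_combination_nonpos) auto
  also have "(\<Sum>g\<in>I. \<mu> g * inner (x0 - fst g) (x0 + snd g)) = (\<Sum>g\<in>I. \<mu> g * H x0)"
    by (intro sum.cong) (auto simp: h I_def)
  also have "\<dots> = H x0"
    using \<mu>(2) by (simp add: sum_distrib_right[symmetric])
  finally have "H x0 \<le> 0" .
  moreover have "(norm (x0 - c g))\<^sup>2 - r g \<le> H x0" if "g \<in> G" for g
    unfolding H_def using assms(1) that by simp
  ultimately have "inner (x0 - a) (x0 + p) \<le> 0" if "(a, p) \<in> G" for a p
    using h[of x0 "(a, p)"] that by fastforce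
  then show ?thesis
    by blast
qed simp

lemma nested_min_norm_points_converge:
  fixes S :: "nat \<Rightarrow> 'a::{real_inner,complete_space} set"
  assumes "\<And>n. convex (S n)" "decseq S"
    and x: "\<And>n. x n \<in> S n" "\<And>n. \<forall>y\<in>S n. norm (x n) \<le> norm y"
    and "\<And>n. norm (x n) \<le> r" "(\<lambda>n. norm (x n)) \<longlonglongrightarrow> r"
  shows "x \<longlonglongrightarrow> lim x"
    and "\<And>y. (\<And>n. y n \<in> S n) \<Longrightarrow> (\<And>n. norm (y n) \<le> r) \<Longrightarrow> y \<longlonglongrightarrow> lim x"
proof -
  define g where "g n = 4 * (r\<^sup>2 - (norm (x n))\<^sup>2)" for n
  have "g \<longlonglongrightarrow> 4 * (r\<^sup>2 - r\<^sup>2)"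
    unfolding g_def by (intro tendsto_intros assms(6))
  then have g: "g \<longlonglongrightarrow> 0"
    by simp
  have close: "(norm (x n - y))\<^sup>2 \<le> g n" if "y \<in> S n" "norm y \<le> r" for n y
    unfolding g_def using assms(1,5) x that by (intro convex_norm_sq_dist_le) auto
  have "Cauchy x"
    using close assms(5) x(1) decseqD[OF assms(2)] by (intro Cauchy_if_norm_sq_diff_le[OF _ g]) blast
  then show l: "x \<longlonglongrightarrow> lim x"
    by (simp add: Cauchy_convergent_iff convergent_LIMSEQ_iff)
  fix y
  assume "\<And>n. y n \<in> S n" "\<And>n. norm (y n) \<le> r"
  then have "(\<lambda>n. x n - y n) \<longlonglongrightarrow> 0"
    using close by (intro tendsto_zero_if_norm_sq_le[OF _ g]) blast
  then show "y \<longlonglongrightarrow> lim x"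
    using tendsto_diff[OF l] by fastforce
qed

lemma finite_subfamily_chain_tendsto_SUP:
  fixes f :: "'b set \<Rightarrow> real"
  assumes bdd: "\<And>\<F>. finite \<F> \<Longrightarrow> \<F> \<subseteq> \<K> \<Longrightarrow> f \<F> \<le> M"
    and mono: "\<And>\<F> \<F>'. finite \<F> \<Longrightarrow> \<F> \<subseteq> \<K> \<Longrightarrow> \<F>' \<subseteq> \<F> \<Longrightarrow> f \<F>' \<le> f \<F>"
  shows "\<exists>\<G>. (\<forall>n. finite (\<G> n) \<and> \<G> n \<subseteq> \<K>) \<and> incseq \<G>
    \<and> (\<lambda>n. f (\<G> n)) \<longlonglongrightarrow> (SUP \<F>\<in>{\<F>. finite \<F> \<and> \<F> \<subseteq> \<K>}. f \<F>)"
proof -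
  let ?fin = "{\<F>. finite \<F> \<and> \<F> \<subseteq> \<K>}"
  define s where "s = (SUP \<F>\<in>?fin. f \<F>)"
  have "bdd_above (f ` ?fin)"
    using bdd by (intro bdd_aboveI[of _ M]) auto
  then have le_s: "f \<F> \<le> s" if "\<F> \<in> ?fin" for \<F>
    unfolding s_def using that by (rule cSUP_upper[rotated])
  have "\<exists>\<F>\<in>?fin. s - 1 / Suc n < f \<F>" for n
    using less_cSUP_iff[OF _ \<open>bdd_above (f ` ?fin)\<close>, of "s - 1 / Suc n"] unfolding s_def by force
  then obtain \<F> where \<F>: "\<And>n. \<F> n \<in> ?fin" "\<And>n. s - 1 / Suc n < f (\<F> n)"
    by metis
  define \<G> where "\<G> n = \<Union>(\<F> ` {..n})" for n
  have \<G>: "\<G> n \<in> ?fin" for n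
    using \<F>(1) unfolding \<G>_def by auto
  have "(\<lambda>n. f (\<G> n)) \<longlonglongrightarrow> s"
  proof (rule tendsto_sandwich[of "\<lambda>n. s - 1 / Suc n" _ _ "\<lambda>n. s"])
    have "f (\<F> n) \<le> f (\<G> n)" for n
      using \<G>[of n] unfolding \<G>_def by (intro mono) auto
    then show "\<forall>\<^sub>F n in sequentially. s - 1 / Suc n \<le> f (\<G> n)"
      using \<F>(2) by (intro always_eventually allI) (meson less_eq_real_def order_trans)
    show "\<forall>\<^sub>F n in sequentially. f (\<G> n) \<le> s"
      using \<G> le_s by simp
    show "(\<lambda>n. s - 1 / Suc n) \<longlonglongrightarrow> s"
      using tendsto_diff[OF tendsto_const LIMSEQ_inverse_real_of_nat, of s] by (simp add: inverse_eq_divide)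
  qed simp
  moreover have "incseq \<G>"
    unfolding \<G>_def incseq_def by (intro allI impI UN_mono) auto
  ultimately show ?thesis
    using \<G> unfolding s_def by blast
qed

lemma finite_subfamily_min_norm_limit:
  fixes S :: "'k set \<Rightarrow> 'a::{real_inner,complete_space} set"
  assumes convex: "\<And>\<F>. finite \<F> \<Longrightarrow> \<F> \<subseteq> \<K> \<Longrightarrow> convex (S \<F>)"
    and antimono: "\<And>\<F> \<F>'. \<F>' \<subseteq> \<F> \<Longrightarrow> S \<F> \<subseteq> S \<F>'"
    and m: "\<And>\<F>. finite \<F> \<Longrightarrow> \<F> \<subseteq> \<K> \<Longrightarrow> m \<F> \<in> S \<F> \<and> (\<forall>y\<in>S \<F>. norm (m \<F>) \<le> norm y)"
    and bdd: "\<And>\<F>. finite \<F> \<Longrightarrow> \<F> \<subseteq> \<K> \<Longrightarrow> norm (m \<F>) \<le> M"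
  shows "\<exists>\<G> l. (\<forall>n. finite (\<G> n) \<and> \<G> n \<subseteq> \<K>) \<and> (\<lambda>n. m (\<G> n)) \<longlonglongrightarrow> l
    \<and> (\<forall>k\<in>\<K>. (\<lambda>n. m (insert k (\<G> n))) \<longlonglongrightarrow> l)"
proof -
  have mono: "norm (m \<F>') \<le> norm (m \<F>)" if "finite \<F>" "\<F> \<subseteq> \<K>" "\<F>' \<subseteq> \<F>" for \<F> \<F>'
  proof -
    have "finite \<F>'" "\<F>' \<subseteq> \<K>"
      using that finite_subset by auto
    moreover have "m \<F> \<in> S \<F>'"
      using m[OF that(1,2)] antimono[OF that(3)] by blast
    ultimately show ?thesis
      using m by blast
  qed
  obtain \<G> where \<G>: "\<forall>n. finite (\<G> n) \<and> \<G> n \<subseteq> \<K>" "incseq \<G>"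
    and lim: "(\<lambda>n. norm (m (\<G> n))) \<longlonglongrightarrow> (SUP \<F>\<in>{\<F>. finite \<F> \<and> \<F> \<subseteq> \<K>}. norm (m \<F>))"
    using finite_subfamily_chain_tendsto_SUP[of \<K> "\<lambda>\<F>. norm (m \<F>)" M, OF bdd mono] by blast
  define r where "r = (SUP \<F>\<in>{\<F>. finite \<F> \<and> \<F> \<subseteq> \<K>}. norm (m \<F>))"
  have le_r: "norm (m \<F>) \<le> r" if "finite \<F>" "\<F> \<subseteq> \<K>" for \<F>
    unfolding r_def using bdd that by (intro cSUP_upper bdd_aboveI[of _ M]) auto
  have fin: "finite (\<G> n)" "\<G> n \<subseteq> \<K>" for n
    using \<G>(1) by simp_all
  have dec: "decseq (\<lambda>n. S (\<G> n))"
    using antimono \<G>(2) unfolding decseq_def incseq_def by blast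
  have min: "m (\<G> n) \<in> S (\<G> n)" "\<forall>y\<in>S (\<G> n). norm (m (\<G> n)) \<le> norm y" for n
    using m[OF fin] by blast+
  note nested = nested_min_norm_points_converge[of "\<lambda>n. S (\<G> n)" "\<lambda>n. m (\<G> n)" r,
      OF convex[OF fin] dec min le_r[OF fin] lim[folded r_def]]
  have "(\<lambda>n. m (insert k (\<G> n))) \<longlonglongrightarrow> lim (\<lambda>n. m (\<G> n))" if "k \<in> \<K>" for k
  proof (rule nested(2))
    have fin': "finite (insert k (\<G> n))" "insert k (\<G> n) \<subseteq> \<K>" for n
      using fin that by auto
    show "m (insert k (\<G> n)) \<in> S (\<G> n)" for n
      using m[OF fin'] antimono[of "\<G> n" "insert k (\<G> n)"] by blast
    show "norm (m (insert k (\<G> n))) \<le> r" for n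
      using le_r[OF fin'] .
  qed
  with \<G>(1) nested(1) show ?thesis
    by (intro exI[of _ \<G>] exI[of _ "lim (\<lambda>n. m (\<G> n))"]) simp
qed

lemma bounded_closed_convex_Inter_nonempty:
  fixes K0 :: "'a::{real_inner,complete_space} set"
  assumes K0: "closed K0" "convex K0" "bounded K0"
    and closed_convex: "\<And>K. K \<in> \<K> \<Longrightarrow> closed K \<and> convex K"
    and fip: "\<And>\<F>. finite \<F> \<Longrightarrow> \<F> \<subseteq> \<K> \<Longrightarrow> K0 \<inter> \<Inter>\<F> \<noteq> {}"
  shows "K0 \<inter> \<Inter>\<K> \<noteq> {}"
proof -
  \<comment> \<open>Instead of weak compactness of \<open>K0\<close>: the minimum-norm points of \<open>K0 \<inter> \<Inter>\<F>\<close> along a chain of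
    finite subfamilies whose minimal norms approach their supremum converge, and the limit lies in
    every member of \<open>\<K>\<close>.\<close>
  define S where "S \<F> = K0 \<inter> \<Inter>\<F>" for \<F>
  have S: "closed (S \<F>)" "convex (S \<F>)" "S \<F> \<noteq> {}" if "finite \<F>" "\<F> \<subseteq> \<K>" for \<F>
  proof -
    have "\<forall>K\<in>\<F>. closed K" "\<forall>K\<in>\<F>. convex K"
      using closed_convex that(2) by auto
    then show "closed (S \<F>)" "convex (S \<F>)"
      unfolding S_def using K0 by (simp_all add: closed_Int closed_Inter convex_Int convex_Inter)
    show "S \<F> \<noteq> {}"
      unfolding S_def using fip[OF that] .
  qed
  define m where "m \<F> = (SOME x. x \<in> S \<F> \<and> (\<forall>y\<in>S \<F>. norm x \<le> norm y))" for \<F>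
  have m: "m \<F> \<in> S \<F> \<and> (\<forall>y\<in>S \<F>. norm (m \<F>) \<le> norm y)" if "finite \<F>" "\<F> \<subseteq> \<K>" for \<F>
  proof -
    have "\<exists>x. x \<in> S \<F> \<and> (\<forall>y\<in>S \<F>. norm x \<le> norm y)"
      using min_norm_point_exists[OF S[OF that]] by blast
    then show ?thesis
      unfolding m_def by (rule someI_ex)
  qed
  obtain M where M: "\<And>x. x \<in> K0 \<Longrightarrow> norm x \<le> M"
    using K0(3) by (auto simp: bounded_iff)
  have antimono: "S \<F> \<subseteq> S \<F>'" if "\<F>' \<subseteq> \<F>" for \<F> \<F>'
    using that unfolding S_def by blast
  have bdd: "norm (m \<F>) \<le> M" if "finite \<F>" "\<F> \<subseteq> \<K>" for \<F>
    using m[OF that] M unfolding S_def by blast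
  obtain \<G> l where \<G>: "\<forall>n. finite (\<G> n) \<and> \<G> n \<subseteq> \<K>" and l: "(\<lambda>n. m (\<G> n)) \<longlonglongrightarrow> l"
    and l_insert: "\<forall>K\<in>\<K>. (\<lambda>n. m (insert K (\<G> n))) \<longlonglongrightarrow> l"
    using finite_subfamily_min_norm_limit[of \<K> S m M, OF S(2) antimono m bdd] by blast
  have fin: "finite (\<G> n)" "\<G> n \<subseteq> \<K>" for n
    using \<G> by simp_all
  have "m (\<G> n) \<in> K0" for n
    using m[OF fin] unfolding S_def by blast
  from closed_sequentially[OF K0(1) this l] have "l \<in> K0" .
  moreover have "l \<in> K" if "K \<in> \<K>" for K
  proof -
    have "closed K"
      using closed_convex[OF that] by blast
    moreover have "m (insert K (\<G> n)) \<in> K" for n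
      using m[of "insert K (\<G> n)"] fin[of n] that unfolding S_def by blast
    ultimately show "l \<in> K"
      using bspec[OF l_insert that] by (rule closed_sequentially)
  qed
  ultimately show ?thesis
    by blast
qed

lemma monotone_extension_antidiagonal:
  fixes G :: "('a::{real_inner,complete_space} \<times> 'a) set"
  assumes mono: "\<And>a p b q. (a, p) \<in> G \<Longrightarrow> (b, q) \<in> G \<Longrightarrow> 0 \<le> inner (a - b) (p - q)"
  shows "\<exists>x. \<forall>(a, p)\<in>G. inner (x - a) (x + p) \<le> 0"
proof (cases "G = {}")
  case False
  then obtain g0 where "g0 \<in> G"
    by blast
  define K where "K g = {x. inner (x - fst g) (x + snd g) \<le> 0}" for g :: "'a \<times> 'a"
  have K_cball: "K g = cball ((1/2) *\<^sub>R (fst g - snd g)) (norm ((1/2) *\<^sub>R (fst g + snd g)))" for g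
  proof -
    have "(norm u)\<^sup>2 - (norm w)\<^sup>2 \<le> 0 \<longleftrightarrow> norm u \<le> norm w" for u w :: 'a
      using abs_le_square_iff[of "norm u" "norm w"] by simp
    then show ?thesis
      unfolding K_def inner_diff_add_eq_norm_sq by (auto simp: dist_norm norm_minus_commute)
  qed
  have "K g0 \<inter> \<Inter>(K ` G) \<noteq> {}"
  proof (rule bounded_closed_convex_Inter_nonempty)
    fix \<F>
    assume "finite \<F>" "\<F> \<subseteq> K ` G"
    then obtain G' where G': "G' \<subseteq> G" "finite G'" "\<F> = K ` G'"
      by (meson finite_subset_image)
    have "\<exists>x. \<forall>(a, p)\<in>insert g0 G'. inner (x - a) (x + p) \<le> 0"
      using G'(1,2) \<open>g0 \<in> G\<close> by (intro monotone_extension_antidiagonal_finite) (auto intro: mono)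
    then obtain x where "\<forall>(a, p)\<in>insert g0 G'. inner (x - a) (x + p) \<le> 0"
      by blast
    then have "x \<in> K g0 \<inter> \<Inter>\<F>"
      unfolding G'(3) K_def by auto
    then show "K g0 \<inter> \<Inter>\<F> \<noteq> {}"
      by blast
  qed (auto simp: K_cball)
  then show ?thesis
    unfolding K_def by (auto simp: case_prod_unfold)
qed simp

theorem maximal_monotone_range_Id_plus:
  fixes A :: "'a::{real_inner,complete_space} \<Rightarrow> 'a set"
  assumes "maximal_monotone A" "0 < \<gamma>"
  shows "\<exists>x. \<exists>u\<in>A x. z = x + \<gamma> *\<^sub>R u"
proof -
  \<comment> \<open>By maximality, a point \<open>(x, -x)\<close> monotonically related to the graph of \<open>\<gamma>A - z\<close> gives
    \<open>(z - x) / \<gamma> \<in> A x\<close>.\<close>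
  let ?G = "{(a, \<gamma> *\<^sub>R p - z) | a p. p \<in> A a}"
  have "0 \<le> inner (a - b) ((\<gamma> *\<^sub>R p - z) - (\<gamma> *\<^sub>R q - z))" if "p \<in> A a" "q \<in> A b" for a b p q
    using monotone_opD[OF maximal_monotone_imp_monotone_op[OF assms(1)] that] assms(2)
    by (simp add: inner_diff_right[symmetric] scaleR_diff_right[symmetric])
  then obtain x where x: "\<forall>(a, p')\<in>?G. inner (x - a) (x + p') \<le> 0"
    using monotone_extension_antidiagonal[of ?G] by blast
  define u where "u = (1/\<gamma>) *\<^sub>R (z - x)"
  have "u \<in> A x"
  proof (rule maximal_monotone_memI[OF assms(1)])
    fix y v
    assume "v \<in> A y"
    then have "inner (x - y) (x + (\<gamma> *\<^sub>R v - z)) \<le> 0"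
      using x by blast
    moreover have "inner (x - y) (x + (\<gamma> *\<^sub>R v - z)) = - \<gamma> * inner (x - y) (u - v)"
      unfolding u_def using assms(2) by (simp add: inner_diff_right inner_add_right algebra_simps)
    ultimately have "0 \<le> \<gamma> * inner (x - y) (u - v)"
      by linarith
    then show "0 \<le> inner (x - y) (u - v)"
      using assms(2) by (simp add: zero_le_mult_iff)
  qed
  moreover have "z = x + \<gamma> *\<^sub>R u"
    unfolding u_def using assms(2) by simp
  ultimately show ?thesis
    by blast
qed

lemma resolvent_eqI:
  assumes "monotone_op A" "0 < \<gamma>" "u \<in> A x" "z = x + \<gamma> *\<^sub>R u"
  shows "resolvent \<gamma> A z = x"
  unfolding resolvent_def
proof (rule the_equality)
  show "\<exists>u\<in>A x. z = x + \<gamma> *\<^sub>R u"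
    using assms(3,4) by blast
  fix x'
  assume "\<exists>u'\<in>A x'. z = x' + \<gamma> *\<^sub>R u'"
  then obtain u' where u': "u' \<in> A x'" "z = x' + \<gamma> *\<^sub>R u'"
    by blast
  have "x' - x = \<gamma> *\<^sub>R (u - u')"
    using assms(4) u'(2) by (simp add: algebra_simps)
  then have "inner (x' - x) (x' - x) = - \<gamma> * inner (x' - x) (u' - u)"
    by (metis inner_commute inner_minus_right inner_scaleR_right minus_diff_eq mult_minus_left)
  moreover have "0 \<le> inner (x' - x) (u' - u)"
    using monotone_opD[OF assms(1) u'(1) assms(3)] .
  ultimately have "inner (x' - x) (x' - x) = 0"
    using assms(2) inner_ge_zero[of "x' - x"] mult_nonneg_nonneg[of \<gamma> "inner (x' - x) (u' - u)"]
    by linarith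
  then show "x' = x"
    by simp
qed

lemma resolvent_mem:
  fixes A :: "'a::{real_inner,complete_space} \<Rightarrow> 'a set"
  assumes "maximal_monotone A" "0 < \<gamma>"
  shows "(1/\<gamma>) *\<^sub>R (z - resolvent \<gamma> A z) \<in> A (resolvent \<gamma> A z)"
proof -
  obtain x u where "u \<in> A x" "z = x + \<gamma> *\<^sub>R u"
    using maximal_monotone_range_Id_plus[OF assms] by blast
  moreover from this have "resolvent \<gamma> A z = x"
    using resolvent_eqI[OF maximal_monotone_imp_monotone_op[OF assms(1)] assms(2)] by blast
  ultimately show ?thesis
    using assms(2) by simp
qed

section \<open>Weak-strong limits in monotone graphs\<close>

lemma cocoercive_imp_monotone_fun:
  assumes "0 \<le> \<beta>" "cocoercive \<beta> C"
  shows "monotone_fun C"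
  unfolding monotone_fun_def
proof (intro allI)
  fix x y
  have "\<beta> * (norm (C x - C y))\<^sup>2 \<le> inner (x - y) (C x - C y)"
    using assms(2) unfolding cocoercive_def by blast
  moreover have "0 \<le> \<beta> * (norm (C x - C y))\<^sup>2"
    using assms(1) by simp
  ultimately show "0 \<le> inner (x - y) (C x - C y)"
    by linarith
qed

lemma cocoercive_imp_lipschitz_op:
  assumes "0 < \<beta>" "cocoercive \<beta> C"
  shows "lipschitz_op (1 / \<beta>) C"
  unfolding lipschitz_op_def
proof (intro allI)
  fix x y
  have "\<beta> * (norm (C x - C y))\<^sup>2 \<le> inner (x - y) (C x - C y)"
    using assms(2) unfolding cocoercive_def by blast
  also have "\<dots> \<le> norm (x - y) * norm (C x - C y)"
    using Cauchy_Schwarz_ineq2[of "x - y" "C x - C y"] by linarith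
  finally have "\<beta> * norm (C x - C y) * norm (C x - C y) \<le> norm (x - y) * norm (C x - C y)"
    by (simp add: power2_eq_square mult.assoc)
  then have "\<beta> * norm (C x - C y) \<le> norm (x - y)"
    by (cases "C x = C y") simp_all
  then show "norm (C x - C y) \<le> 1 / \<beta> * norm (x - y)"
    using assms(1) by (simp add: field_simps)
qed

lemma monotone_fun_add:
  assumes "monotone_fun B" "monotone_fun C"
  shows "monotone_fun (\<lambda>x. B x + C x)"
  unfolding monotone_fun_def
proof (intro allI)
  fix x y
  have "inner (x - y) (B x + C x - (B y + C y)) = inner (x - y) (B x - B y) + inner (x - y) (C x - C y)"
    by (simp add: inner_diff_right inner_add_right)
  then show "0 \<le> inner (x - y) (B x + C x - (B y + C y))"
    using assms unfolding monotone_fun_def by (metis add_nonneg_nonneg)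
qed

lemma lipschitz_op_add:
  assumes "lipschitz_op L B" "lipschitz_op K C"
  shows "lipschitz_op (L + K) (\<lambda>x. B x + C x)"
  unfolding lipschitz_op_def
proof (intro allI)
  fix x y
  have "norm (B x + C x - (B y + C y)) \<le> norm (B x - B y) + norm (C x - C y)"
    using norm_triangle_ineq[of "B x - B y" "C x - C y"] by (simp add: algebra_simps)
  also have "\<dots> \<le> L * norm (x - y) + K * norm (x - y)"
    using assms unfolding lipschitz_op_def by (blast intro: add_mono)
  finally show "norm (B x + C x - (B y + C y)) \<le> (L + K) * norm (x - y)"
    by (simp add: distrib_right)
qed

lemma lipschitz_inner_le:
  assumes "lipschitz_op L B" "0 \<le> L"
  shows "inner u (B p - B q) \<le> L / 2 * ((norm u)\<^sup>2 + (norm (p - q))\<^sup>2)"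
proof -
  have "inner u (B p - B q) \<le> norm u * norm (B p - B q)"
    using Cauchy_Schwarz_ineq2[of u "B p - B q"] by linarith
  also have "\<dots> \<le> L * (norm u * norm (p - q))"
    using assms(1) unfolding lipschitz_op_def by (metis mult.left_commute mult_left_mono norm_ge_zero)
  also have "\<dots> \<le> L * (((norm u)\<^sup>2 + (norm (p - q))\<^sup>2) / 2)"
    using sum_squares_bound[of "norm u" "norm (p - q)"] assms(2) by (intro mult_left_mono) simp_all
  finally show ?thesis
    by simp
qed

lemma lipschitz_op_tendsto_diff:
  assumes "lipschitz_op L B" "(\<lambda>k. u k - v k) \<longlonglongrightarrow> 0"
  shows "(\<lambda>k. B (u k) - B (v k)) \<longlonglongrightarrow> 0"
proof (rule Lim_null_comparison)
  show "\<forall>\<^sub>F k in sequentially. norm (B (u k) - B (v k)) \<le> L * norm (u k - v k)"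
    using assms(1) unfolding lipschitz_op_def by simp
  show "(\<lambda>k. L * norm (u k - v k)) \<longlonglongrightarrow> 0"
    using tendsto_mult_right_zero[OF tendsto_norm_zero[OF assms(2)]] .
qed

lemma tendsto_inner_weak_strong_pair:
  fixes X Y U V :: "nat \<Rightarrow> 'a::real_inner"
  assumes wX: "weakly_converges X x" and wU: "weakly_converges U u"
    and XY: "(\<lambda>k. X k - Y k) \<longlonglongrightarrow> 0" and UV: "(\<lambda>k. U k + V k) \<longlonglongrightarrow> 0"
    and bdd: "bounded (range U)" "bounded (range Y)"
  shows "(\<lambda>k. inner (X k - p) (U k - a) + inner (Y k - q) (V k - w))
    \<longlonglongrightarrow> inner (x - p) (u - a) + inner (x - q) (- u - w)"
proof -
  have wY: "weakly_converges Y x"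
    using tendsto_minus[OF XY] by (intro weakly_converges_diff_tendsto_zero[OF wX]) simp
  have wV: "weakly_converges V (- u)"
    using weakly_converges_diff_tendsto_zero[OF weakly_converges_scaleR[OF wU, of "- 1"], of V] UV
    by (simp add: add.commute)
  have "(\<lambda>k. inner (X k) c) \<longlonglongrightarrow> inner x c" "(\<lambda>k. inner (Y k) c) \<longlonglongrightarrow> inner x c"
    "(\<lambda>k. inner (U k) c) \<longlonglongrightarrow> inner u c" "(\<lambda>k. inner (V k) c) \<longlonglongrightarrow> inner (- u) c" for c
    using wX wY wU wV unfolding weakly_converges_def by blast+
  then have "(\<lambda>k. inner (X k - Y k) (U k) + inner (U k + V k) (Y k) - inner (X k) a - inner (U k) p
        + inner p a - inner (Y k) w - inner (V k) q + inner q w)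
      \<longlonglongrightarrow> 0 + 0 - inner x a - inner u p + inner p a - inner x w - inner (- u) q + inner q w"
    by (intro tendsto_add tendsto_diff tendsto_const tendsto_inner_zero_bounded XY UV bdd)
  moreover have "inner (X k - p) (U k - a) + inner (Y k - q) (V k - w)
      = inner (X k - Y k) (U k) + inner (U k + V k) (Y k) - inner (X k) a - inner (U k) p
        + inner p a - inner (Y k) w - inner (V k) q + inner q w" for k
    by (simp add: inner_diff_left inner_diff_right inner_add_left inner_commute[of _ "U k"]
        inner_commute[of _ "V k"])
  moreover have "inner (x - p) (u - a) + inner (x - q) (- u - w)
      = 0 + 0 - inner x a - inner u p + inner p a - inner x w - inner (- u) q + inner q w"
    by (simp add: inner_diff_left inner_diff_right inner_add_right inner_commute[of _ u] algebra_simps)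
  ultimately show ?thesis
    by simp
qed

lemma monotone_pair_limit_inequality:
  fixes X Y U V :: "nat \<Rightarrow> 'a::real_inner"
  assumes "monotone_op A1" "monotone_op A2" "monotone_fun D"
    and U: "\<And>k. U k \<in> A1 (X k)" and V: "\<And>k. V k - D (Y k) \<in> A2 (Y k)"
    and "(\<lambda>k. X k - Y k) \<longlonglongrightarrow> 0" "(\<lambda>k. U k + V k) \<longlonglongrightarrow> 0"
    and "bounded (range U)" "bounded (range Y)"
    and "weakly_converges X x" "weakly_converges U u"
    and "a \<in> A1 p" "b \<in> A2 q"
  shows "0 \<le> inner (x - p) (u - a) + inner (x - q) (- u - b - D q)"
proof -
  have "0 \<le> inner (X k - p) (U k - a) + inner (Y k - q) (V k - (b + D q))" for k
  proof -
    have "0 \<le> inner (X k - p) (U k - a)"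
      using monotone_opD[OF assms(1) U \<open>a \<in> A1 p\<close>] .
    moreover have "0 \<le> inner (Y k - q) ((V k - D (Y k)) - b)"
      using monotone_opD[OF assms(2) V \<open>b \<in> A2 q\<close>] .
    moreover have "0 \<le> inner (Y k - q) (D (Y k) - D q)"
      using assms(3) unfolding monotone_fun_def by blast
    moreover have "inner (Y k - q) (V k - (b + D q))
        = inner (Y k - q) ((V k - D (Y k)) - b) + inner (Y k - q) (D (Y k) - D q)"
      by (simp add: inner_diff_right inner_add_right)
    ultimately show ?thesis
      by linarith
  qed
  with tendsto_inner_weak_strong_pair[OF assms(10,11,6-9), of p a q "b + D q"]
  have "0 \<le> inner (x - p) (u - a) + inner (x - q) (- u - (b + D q))"
    by (intro LIMSEQ_le_const) auto
  then show ?thesis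
    by (simp add: diff_diff_eq)
qed

lemma maximal_monotone_pair_memI:
  fixes A1 A2 :: "'a::{real_inner,complete_space} \<Rightarrow> 'a set"
  assumes mm: "maximal_monotone A1" "maximal_monotone A2" and "lipschitz_op K D"
    and ineq: "\<And>p a q b. a \<in> A1 p \<Longrightarrow> b \<in> A2 q \<Longrightarrow> 0 \<le> inner (x - p) (u - a) + inner (x - q) (- u - b - D q)"
  shows "u \<in> A1 x" "- u - D x \<in> A2 x"
proof -
  \<comment> \<open>Test the inequality with the resolvent points \<open>p\<close>, \<open>q\<close> of \<open>x + t u\<close> and \<open>x + t c\<close>: as \<open>t \<bar>K\<bar> < 1\<close>,
    the resolvent terms dominate the Lipschitz error of \<open>D\<close>, which forces \<open>a = u\<close> and \<open>b = c\<close>.\<close>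
  define t where "t = 1 / (\<bar>K\<bar> + 1)"
  have "0 < t"
    unfolding t_def by simp
  have "t * K < 1"
    unfolding t_def by (simp add: field_simps)
  define c where "c = - u - D x"
  obtain p a where a: "a \<in> A1 p" "x + t *\<^sub>R u = p + t *\<^sub>R a"
    using maximal_monotone_range_Id_plus[OF mm(1) \<open>0 < t\<close>] by blast
  obtain q b where b: "b \<in> A2 q" "x + t *\<^sub>R c = q + t *\<^sub>R b"
    using maximal_monotone_range_Id_plus[OF mm(2) \<open>0 < t\<close>] by blast
  have xp: "x - p = t *\<^sub>R (a - u)" and xq: "x - q = t *\<^sub>R (b - c)"
    using a(2) b(2) by (simp_all add: algebra_simps)
  have "inner (x - q) (D x - D q) \<le> norm (x - q) * norm (D x - D q)"
    using Cauchy_Schwarz_ineq2[of "x - q" "D x - D q"] by linarith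
  also have "\<dots> \<le> norm (x - q) * (K * norm (x - q))"
    using assms(3) unfolding lipschitz_op_def by (simp add: mult_left_mono)
  also have "\<dots> = t * (t * K) * (norm (b - c))\<^sup>2"
    unfolding xq using \<open>0 < t\<close> by (simp add: power2_eq_square)
  finally have D: "inner (x - q) (D x - D q) \<le> t * (t * K) * (norm (b - c))\<^sup>2" .
  have "u - a = - (a - u)"
    by simp
  then have "inner (x - p) (u - a) = - t * (norm (a - u))\<^sup>2"
    unfolding xp power2_norm_eq_inner by (simp only: inner_minus_right inner_scaleR_left)
  moreover have "inner (x - q) (- u - b - D q) = - t * (norm (b - c))\<^sup>2 + inner (x - q) (D x - D q)"
    unfolding c_def xq power2_norm_eq_inner
    by (simp add: inner_diff_right inner_diff_left inner_add_right inner_minus_right inner_commute algebra_simps)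
  ultimately have "t * (norm (a - u))\<^sup>2 + t * (1 - t * K) * (norm (b - c))\<^sup>2 \<le> 0"
    using ineq[OF a(1) b(1)] D by (simp add: algebra_simps)
  moreover have "0 \<le> t * (norm (a - u))\<^sup>2" "0 \<le> t * (1 - t * K) * (norm (b - c))\<^sup>2"
    using \<open>0 < t\<close> \<open>t * K < 1\<close> by simp_all
  ultimately have "t * (norm (a - u))\<^sup>2 = 0" "t * (1 - t * K) * (norm (b - c))\<^sup>2 = 0"
    by linarith+
  then have "a = u" "b = c"
    using \<open>0 < t\<close> \<open>t * K < 1\<close> by simp_all
  then have "p = x" "q = x"
    using xp xq by simp_all
  then show "u \<in> A1 x" "- u - D x \<in> A2 x"
    using a(1) b(1) \<open>a = u\<close> \<open>b = c\<close> unfolding c_def by simp_all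
qed

theorem maximal_monotone_pair_weak_strong_limit:
  fixes A1 A2 :: "'a::{real_inner,complete_space} \<Rightarrow> 'a set"
  assumes "maximal_monotone A1" "maximal_monotone A2" "monotone_fun D" "lipschitz_op K D"
    and "\<And>k. U k \<in> A1 (X k)" "\<And>k. V k - D (Y k) \<in> A2 (Y k)"
    and "(\<lambda>k. X k - Y k) \<longlonglongrightarrow> 0" "(\<lambda>k. U k + V k) \<longlonglongrightarrow> 0"
    and "bounded (range U)" "bounded (range Y)"
    and "weakly_converges X x" "weakly_converges U u"
  shows "u \<in> A1 x" "- u - D x \<in> A2 x"
  using maximal_monotone_pair_memI[OF assms(1,2,4)] monotone_pair_limit_inequality[OF
      maximal_monotone_imp_monotone_op[OF assms(1)] maximal_monotone_imp_monotone_op[OF assms(2)]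
      assms(3,5-12)]
  by blast+

section \<open>The splitting iteration\<close>

lemma three_operator_step_inequality:
  fixes z0 z1 x1 y1 a b f xb zb ab bb fb :: "'a::real_inner"
  assumes "0 < \<gamma>" and mono: "0 \<le> inner (x1 - xb) (a - ab)" "0 \<le> inner (y1 - xb) (b - bb)"
    and step: "z0 = x1 + \<gamma> *\<^sub>R a" "y1 + \<gamma> *\<^sub>R b = 2 *\<^sub>R x1 - z0 - \<gamma> *\<^sub>R f" "z1 = z0 + y1 - x1"
    and fixed: "ab + bb + fb = 0" "zb = xb + \<gamma> *\<^sub>R ab"
  shows "(norm (z1 - zb))\<^sup>2 + (norm (z1 - z0))\<^sup>2 + 2 * \<gamma> * inner (y1 - xb) (f - fb) \<le> (norm (z0 - zb))\<^sup>2"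
proof -
  define u v w where "u = x1 - xb" and "v = y1 - xb" and "w = z0 - zb"
  have "\<gamma> *\<^sub>R (a - ab) = w - u"
    using step(1) fixed(2) unfolding u_def w_def by (simp add: algebra_simps)
  then have 1: "\<gamma> * inner (x1 - xb) (a - ab) = inner u (w - u)"
    unfolding u_def by (metis inner_scaleR_right)
  have "\<gamma> *\<^sub>R bb = - \<gamma> *\<^sub>R ab - \<gamma> *\<^sub>R fb"
    using fixed(1) by (simp add: eq_neg_iff_add_eq_0 algebra_simps flip: scaleR_add_right)
  then have "\<gamma> *\<^sub>R (b - bb) = 2 *\<^sub>R u - v - w - \<gamma> *\<^sub>R (f - fb)"
    using step(2) fixed(2) unfolding u_def v_def w_def by (simp add: algebra_simps scaleR_2)
  then have 2: "\<gamma> * inner (y1 - xb) (b - bb) = inner v (2 *\<^sub>R u - v - w) - \<gamma> * inner (y1 - xb) (f - fb)"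
    unfolding v_def by (metis inner_diff_right inner_scaleR_right)
  have "z1 - z0 = v - u" "z1 - zb = w + v - u"
    using step(3) unfolding u_def v_def w_def by (simp_all add: algebra_simps)
  then have "(norm (z0 - zb))\<^sup>2 - (norm (z1 - zb))\<^sup>2 - (norm (z1 - z0))\<^sup>2
      = (norm w)\<^sup>2 - (norm (w + v - u))\<^sup>2 - (norm (v - u))\<^sup>2"
    unfolding w_def by (simp only:)
  also have "\<dots> = 2 * inner u (w - u) + 2 * inner v (2 *\<^sub>R u - v - w)"
    unfolding power2_norm_eq_inner
    by (simp add: inner_diff_left inner_diff_right inner_add_left inner_add_right inner_commute
        algebra_simps)
  finally have "(norm (z0 - zb))\<^sup>2 - (norm (z1 - zb))\<^sup>2 - (norm (z1 - z0))\<^sup>2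
      = 2 * inner u (w - u) + 2 * inner v (2 *\<^sub>R u - v - w)" .
  moreover have "0 \<le> \<gamma> * inner (x1 - xb) (a - ab) + \<gamma> * inner (y1 - xb) (b - bb)"
    using mono \<open>0 < \<gamma>\<close> by simp
  ultimately show ?thesis
    using 1 2 mult.assoc[of 2 \<gamma> "inner (y1 - xb) (f - fb)"] by linarith
qed

lemma cocoercive_inner_lower_bound:
  assumes "0 < \<beta>" "cocoercive \<beta> C"
  shows "- (norm (y1 - y0))\<^sup>2 / (4 * \<beta>) \<le> inner (y1 - xb) (C y0 - C xb)"
proof -
  define c e where "c = C y0 - C xb" and "e = y1 - y0"
  have "0 \<le> (norm ((2 * \<beta>) *\<^sub>R c + e))\<^sup>2"
    by simp
  also have "\<dots> = 4 * \<beta> * (\<beta> * (norm c)\<^sup>2 + inner e c) + (norm e)\<^sup>2"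
    unfolding power2_norm_eq_inner
    by (simp add: inner_add_left inner_add_right inner_commute algebra_simps)
  finally have "- (norm e)\<^sup>2 \<le> 4 * \<beta> * (\<beta> * (norm c)\<^sup>2 + inner e c)"
    by linarith
  also have "\<dots> \<le> 4 * \<beta> * (inner (y0 - xb) c + inner e c)"
    using assms unfolding cocoercive_def c_def by (simp add: mult_left_mono)
  also have "\<dots> = inner (y1 - xb) c * (4 * \<beta>)"
    unfolding e_def by (simp add: inner_diff_left)
  finally show ?thesis
    using assms(1) unfolding c_def e_def by (subst pos_divide_le_eq) simp_all
qed

lemma reflected_inner_lower_bound:
  assumes "monotone_fun B" "lipschitz_op L B" "0 \<le> L"
  shows "inner (y0 - xb) (B y0 - B ym) - inner (y1 - xb) (B y1 - B y0)
      - L / 2 * ((norm (y1 - y0))\<^sup>2 + (norm (y0 - ym))\<^sup>2)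
    \<le> inner (y1 - xb) (2 *\<^sub>R B y0 - B ym - B xb)"
proof -
  have "inner (y1 - y0) (B ym - B y0) \<le> L / 2 * ((norm (y1 - y0))\<^sup>2 + (norm (y0 - ym))\<^sup>2)"
    using lipschitz_inner_le[OF assms(2,3), of "y1 - y0" ym y0] by (simp add: norm_minus_commute)
  moreover have "0 \<le> inner (y1 - xb) (B y1 - B xb)"
    using assms(1) unfolding monotone_fun_def by blast
  moreover have "inner (y1 - xb) (2 *\<^sub>R B y0 - B ym - B xb)
      = inner (y1 - xb) (B y1 - B xb) - inner (y1 - xb) (B y1 - B y0) + inner (y0 - xb) (B y0 - B ym)
        - inner (y1 - y0) (B ym - B y0)"
    by (simp add: inner_diff_left inner_diff_right scaleR_2 inner_add_right algebra_simps)
  ultimately show ?thesis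
    by linarith
qed

lemma forward_term_lower_bound:
  assumes "monotone_fun B" "lipschitz_op L B" "0 \<le> L" "0 < \<beta>" "cocoercive \<beta> C"
  shows "inner (y0 - xb) (B y0 - B ym) - inner (y1 - xb) (B y1 - B y0)
      - L / 2 * ((norm (y1 - y0))\<^sup>2 + (norm (y0 - ym))\<^sup>2) - (norm (y1 - y0))\<^sup>2 / (4 * \<beta>)
    \<le> inner (y1 - xb) ((2 *\<^sub>R B y0 - B ym + C y0) - (B xb + C xb))"
proof -
  have "(2 *\<^sub>R B y0 - B ym + C y0) - (B xb + C xb) = (2 *\<^sub>R B y0 - B ym - B xb) + (C y0 - C xb)"
    by (simp add: algebra_simps)
  then have "inner (y1 - xb) ((2 *\<^sub>R B y0 - B ym + C y0) - (B xb + C xb))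
      = inner (y1 - xb) (2 *\<^sub>R B y0 - B ym - B xb) + inner (y1 - xb) (C y0 - C xb)"
    by (simp only: inner_add_right)
  then show ?thesis
    using reflected_inner_lower_bound[OF assms(1-3), of y0 xb ym y1]
      cocoercive_inner_lower_bound[OF assms(4,5), of y1 y0 xb] by linarith
qed

lemma bounded_range_if_bounded_Suc:
  "bounded (range (\<lambda>k. f (Suc k))) \<Longrightarrow> bounded (range f)"
proof -
  assume "bounded (range (\<lambda>k. f (Suc k)))"
  moreover have "range f \<subseteq> insert (f 0) (range (\<lambda>k. f (Suc k)))"
    by (auto simp: image_iff) (metis not0_implies_Suc)
  ultimately show "bounded (range f)"
    by (metis bounded_insert bounded_subset)
qed

locale splitting_iteration =
  fixes A1 A2 :: "'a::{real_inner,complete_space} \<Rightarrow> 'a set"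
    and B C :: "'a \<Rightarrow> 'a"
    and L \<beta> \<gamma> :: real
    and x y z :: "nat \<Rightarrow> 'a"
    and y_minus1 :: 'a
  assumes A1: "maximal_monotone A1" and A2: "maximal_monotone A2"
    and B_monotone: "monotone_fun B" and L_pos: "L > 0" and B_lipschitz: "lipschitz_op L B"
    and \<beta>_pos: "\<beta> > 0" and C_cocoercive: "cocoercive \<beta> C"
    and zer_nonempty: "zer (op_sum4 A1 A2 B C) \<noteq> {}"
    and \<gamma>_pos: "0 < \<gamma>" and \<gamma>_bound: "\<gamma> < \<beta> / (2 * (1 + 4 * \<beta> * L))"
    and x_Suc: "\<And>n. x (Suc n) = resolvent \<gamma> A1 (z n)"
    and y_Suc: "\<And>n. y (Suc n) = resolvent \<gamma> A2
            (2 *\<^sub>R x (Suc n) - z n - (2 * \<gamma>) *\<^sub>R B (y n)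
             + \<gamma> *\<^sub>R B (if n = 0 then y_minus1 else y (n - 1)) - \<gamma> *\<^sub>R C (y n))"
    and z_Suc: "\<And>n. z (Suc n) = z n + y (Suc n) - x (Suc n)"
begin

definition w :: "nat \<Rightarrow> 'a" where
  "w n = 2 *\<^sub>R x (Suc n) - z n - (2 * \<gamma>) *\<^sub>R B (y n)
     + \<gamma> *\<^sub>R B (if n = 0 then y_minus1 else y (n - 1)) - \<gamma> *\<^sub>R C (y n)"

definition a1 :: "nat \<Rightarrow> 'a" where "a1 n = (1 / \<gamma>) *\<^sub>R (z n - x (Suc n))"

definition a2 :: "nat \<Rightarrow> 'a" where "a2 n = (1 / \<gamma>) *\<^sub>R (w n - y (Suc n))"

definition \<kappa> :: real where "\<kappa> = \<gamma> / (2 * \<beta>) + 2 * \<gamma> * L"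

definition Fix :: "'a set" where
  "Fix = {xb + \<gamma> *\<^sub>R ab | xb ab bb. ab \<in> A1 xb \<and> bb \<in> A2 xb \<and> ab + bb + B xb + C xb = 0}"

text \<open>The Lyapunov function of the convergence proof, for a fixed point \<open>zb = xb + \<gamma> ab\<close>.\<close>

definition energy :: "'a \<Rightarrow> 'a \<Rightarrow> nat \<Rightarrow> real" where
  "energy zb xb k = (norm (z (Suc k) - zb))\<^sup>2
     - 2 * \<gamma> * inner (y (Suc k) - xb) (B (y (Suc k)) - B (y k))
     + \<gamma> * L * (norm (y (Suc k) - y k))\<^sup>2 + 2 * \<kappa> * (norm (z (Suc k) - z k))\<^sup>2"

lemma a1_mem: "a1 n \<in> A1 (x (Suc n))"
  unfolding a1_def x_Suc using resolvent_mem[OF A1 \<gamma>_pos] .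

lemma z_eq: "z n = x (Suc n) + \<gamma> *\<^sub>R a1 n"
  unfolding a1_def using \<gamma>_pos by simp

lemma a2_mem: "a2 n \<in> A2 (y (Suc n))"
proof -
  have "y (Suc n) = resolvent \<gamma> A2 (w n)"
    unfolding w_def by (rule y_Suc)
  then show ?thesis
    unfolding a2_def using resolvent_mem[OF A2 \<gamma>_pos] by simp
qed

lemma w_eq: "w n = y (Suc n) + \<gamma> *\<^sub>R a2 n"
  unfolding a2_def using \<gamma>_pos by simp

lemma z_Suc_eq: "z (Suc n) = y (Suc n) + \<gamma> *\<^sub>R a1 n"
  using z_Suc[of n] z_eq[of n] by (simp add: algebra_simps)

lemma \<kappa>_bounds: "4 * \<kappa> < 1" "\<gamma> * L \<le> 2 * \<kappa>" "0 < \<kappa>"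
proof -
  have "0 < 2 * (1 + 4 * \<beta> * L)"
    using \<beta>_pos L_pos by (simp add: add_pos_pos)
  then have "\<gamma> * (2 * (1 + 4 * \<beta> * L)) < \<beta>"
    using \<gamma>_bound by (simp add: pos_less_divide_eq)
  then have "4 * \<kappa> * \<beta> < \<beta>"
    unfolding \<kappa>_def using \<beta>_pos by (simp add: algebra_simps)
  then show "4 * \<kappa> < 1"
    using \<beta>_pos by simp
  show "0 < \<kappa>"
    unfolding \<kappa>_def using \<gamma>_pos \<beta>_pos L_pos by (intro add_pos_pos) simp_all
  show "\<gamma> * L \<le> 2 * \<kappa>"
    unfolding \<kappa>_def using \<gamma>_pos \<beta>_pos L_pos by simp
qed

lemma C_lipschitz: "lipschitz_op (1 / \<beta>) C"
  by (rule cocoercive_imp_lipschitz_op[OF \<beta>_pos C_cocoercive])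

lemma FixE:
  assumes "zb \<in> Fix"
  obtains xb ab bb where "ab \<in> A1 xb" "bb \<in> A2 xb" "ab + bb + B xb + C xb = 0" "zb = xb + \<gamma> *\<^sub>R ab"
  using assms unfolding Fix_def by blast

lemma solution_exists:
  obtains xb ab bb where "ab \<in> A1 xb" "bb \<in> A2 xb" "ab + bb + B xb + C xb = 0"
proof -
  obtain xb where "0 \<in> op_sum4 A1 A2 B C xb"
    using zer_nonempty unfolding zer_def by blast
  then obtain ab bb where "ab \<in> A1 xb" "bb \<in> A2 xb" "0 = ab + bb + B xb + C xb"
    unfolding op_sum4_def by blast
  then show ?thesis
    using that by simp
qed

lemma resolvent_Fix:
  assumes "zb \<in> Fix"
  shows "resolvent \<gamma> A1 zb \<in> zer (op_sum4 A1 A2 B C)"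
proof -
  obtain xb ab bb where "ab \<in> A1 xb" "bb \<in> A2 xb" "ab + bb + B xb + C xb = 0" "zb = xb + \<gamma> *\<^sub>R ab"
    using assms by (rule FixE)
  moreover from this have "resolvent \<gamma> A1 zb = xb"
    using resolvent_eqI[OF maximal_monotone_imp_monotone_op[OF A1] \<gamma>_pos] by blast
  ultimately show ?thesis
    unfolding zer_def op_sum4_def by force
qed

lemma x_dist_le:
  assumes "ab \<in> A1 xb" "zb = xb + \<gamma> *\<^sub>R ab"
  shows "norm (x (Suc n) - xb) \<le> norm (z n - zb)"
proof -
  have "z n - zb = (x (Suc n) - xb) + \<gamma> *\<^sub>R (a1 n - ab)"
    using z_eq[of n] assms(2) by (simp add: algebra_simps)
  moreover have "0 \<le> inner (x (Suc n) - xb) (\<gamma> *\<^sub>R (a1 n - ab))"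
    using monotone_opD[OF maximal_monotone_imp_monotone_op[OF A1] a1_mem assms(1)] \<gamma>_pos by simp
  ultimately show ?thesis
    using norm_le_norm_add_if_inner_nonneg(1) by metis
qed

lemma x_y_dist_le: "norm (x (Suc (Suc n)) - y (Suc n)) \<le> norm (z (Suc n) - z n)"
proof -
  have "z (Suc n) - z n = (x (Suc (Suc n)) - x (Suc n)) + \<gamma> *\<^sub>R (a1 (Suc n) - a1 n)"
    using z_eq[of n] z_eq[of "Suc n"] by (simp add: algebra_simps)
  moreover have "0 \<le> inner (x (Suc (Suc n)) - x (Suc n)) (\<gamma> *\<^sub>R (a1 (Suc n) - a1 n))"
    using monotone_opD[OF maximal_monotone_imp_monotone_op[OF A1] a1_mem a1_mem] \<gamma>_pos by simp
  moreover have "x (Suc (Suc n)) - y (Suc n) = - (\<gamma> *\<^sub>R (a1 (Suc n) - a1 n))"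
    using z_Suc_eq[of n] z_eq[of "Suc n"] by (simp add: algebra_simps)
  ultimately show ?thesis
    using norm_le_norm_add_if_inner_nonneg(2) by (metis norm_minus_cancel)
qed

lemma y_step_le: "norm (y (Suc (Suc n)) - y (Suc n)) \<le> norm (z (Suc (Suc n)) - z (Suc n)) + norm (z (Suc n) - z n)"
proof -
  have eq: "y (Suc (Suc n)) - y (Suc n) = (z (Suc (Suc n)) - z (Suc n)) + (x (Suc (Suc n)) - y (Suc n))"
    using z_Suc[of "Suc n"] by (simp add: algebra_simps)
  show ?thesis
    unfolding eq using norm_triangle_ineq[of "z (Suc (Suc n)) - z (Suc n)" "x (Suc (Suc n)) - y (Suc n)"] x_y_dist_le[of n]
    by linarith
qed

lemma y_step_sq_le:
  "(norm (y (Suc (Suc n)) - y (Suc n)))\<^sup>2 \<le> 2 * (norm (z (Suc (Suc n)) - z (Suc n)))\<^sup>2 + 2 * (norm (z (Suc n) - z n))\<^sup>2"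
proof -
  have "(norm (y (Suc (Suc n)) - y (Suc n)))\<^sup>2 \<le> (norm (z (Suc (Suc n)) - z (Suc n)) + norm (z (Suc n) - z n))\<^sup>2"
    using y_step_le[of n] by (intro power_mono) auto
  also have "\<dots> \<le> 2 * (norm (z (Suc (Suc n)) - z (Suc n)))\<^sup>2 + 2 * (norm (z (Suc n) - z n))\<^sup>2"
    using sum_squares_bound[of "norm (z (Suc (Suc n)) - z (Suc n))" "norm (z (Suc n) - z n)"]
    by (simp add: power2_sum)
  finally show ?thesis .
qed

lemma y_dist_sq_le:
  assumes "ab \<in> A1 xb" "zb = xb + \<gamma> *\<^sub>R ab"
  shows "(norm (y (Suc n) - xb))\<^sup>2 \<le> (norm (z (Suc n) - zb))\<^sup>2 + (norm (z (Suc n) - z n))\<^sup>2"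
proof -
  have "0 \<le> inner (x (Suc n) - xb) (\<gamma> *\<^sub>R (a1 n - ab))"
    using monotone_opD[OF maximal_monotone_imp_monotone_op[OF A1] a1_mem assms(1)] \<gamma>_pos by simp
  note bound = norm_sq_add_le_if_inner_nonneg[OF this, of "z (Suc n) - z n"]
  have "x (Suc n) - xb + (z (Suc n) - z n) = y (Suc n) - xb"
    using z_Suc[of n] by (simp add: algebra_simps)
  moreover have "y (Suc n) - xb + \<gamma> *\<^sub>R (a1 n - ab) = z (Suc n) - zb"
    using z_Suc_eq[of n] assms(2) by (simp add: algebra_simps)
  ultimately show ?thesis
    using bound by (simp only:)
qed

lemma energy_step:
  assumes ab: "ab \<in> A1 xb" and bb: "bb \<in> A2 xb" and sum: "ab + bb + B xb + C xb = 0"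
    and zb: "zb = xb + \<gamma> *\<^sub>R ab"
  shows "energy zb xb (Suc k) \<le> energy zb xb k - (1 - 4 * \<kappa>) * (norm (z (Suc (Suc k)) - z (Suc k)))\<^sup>2"
proof -
  define f where "f = 2 *\<^sub>R B (y (Suc k)) - B (y k) + C (y (Suc k))"
  define Z0 Z1 D0 D1 Y0 Y1 R0 R1 I where
    "Z0 = (norm (z (Suc k) - zb))\<^sup>2" and "Z1 = (norm (z (Suc (Suc k)) - zb))\<^sup>2"
    and "D0 = (norm (z (Suc k) - z k))\<^sup>2" and "D1 = (norm (z (Suc (Suc k)) - z (Suc k)))\<^sup>2"
    and "Y0 = (norm (y (Suc k) - y k))\<^sup>2" and "Y1 = (norm (y (Suc (Suc k)) - y (Suc k)))\<^sup>2"
    and "R0 = inner (y (Suc k) - xb) (B (y (Suc k)) - B (y k))"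
    and "R1 = inner (y (Suc (Suc k)) - xb) (B (y (Suc (Suc k))) - B (y (Suc k)))"
    and "I = inner (y (Suc (Suc k)) - xb) (f - (B xb + C xb))"
  have "Z1 + D1 + 2 * \<gamma> * I \<le> Z0"
    unfolding Z0_def Z1_def D1_def I_def
  proof (rule three_operator_step_inequality[OF \<gamma>_pos])
    show "0 \<le> inner (x (Suc (Suc k)) - xb) (a1 (Suc k) - ab)"
      by (rule monotone_opD[OF maximal_monotone_imp_monotone_op[OF A1] a1_mem ab])
    show "0 \<le> inner (y (Suc (Suc k)) - xb) (a2 (Suc k) - bb)"
      by (rule monotone_opD[OF maximal_monotone_imp_monotone_op[OF A2] a2_mem bb])
    show "y (Suc (Suc k)) + \<gamma> *\<^sub>R a2 (Suc k) = 2 *\<^sub>R x (Suc (Suc k)) - z (Suc k) - \<gamma> *\<^sub>R f"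
      using w_eq[of "Suc k"] unfolding w_def f_def by (simp add: algebra_simps)
    show "ab + bb + (B xb + C xb) = 0"
      using sum by (simp add: add.assoc)
  qed (rule z_eq, rule z_Suc, rule zb)
  moreover have "R0 - R1 - L / 2 * (Y1 + Y0) - Y1 / (4 * \<beta>) \<le> I"
    unfolding R0_def R1_def Y0_def Y1_def I_def f_def
    by (rule forward_term_lower_bound[OF B_monotone B_lipschitz less_imp_le[OF L_pos] \<beta>_pos C_cocoercive])
  then have "2 * \<gamma> * (R0 - R1 - L / 2 * (Y1 + Y0) - Y1 / (4 * \<beta>)) \<le> 2 * \<gamma> * I"
    using \<gamma>_pos by (intro mult_left_mono) simp_all
  moreover have "2 * \<gamma> * (R0 - R1 - L / 2 * (Y1 + Y0) - Y1 / (4 * \<beta>))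
      = 2 * \<gamma> * R0 - 2 * \<gamma> * R1 - \<gamma> * L * Y0 - \<kappa> * Y1 + \<gamma> * L * Y1"
    unfolding \<kappa>_def using \<beta>_pos by (simp add: field_simps)
  moreover have "\<kappa> * Y1 \<le> \<kappa> * (2 * D1 + 2 * D0)"
    using y_step_sq_le[of k] \<kappa>_bounds(3) unfolding Y1_def D1_def D0_def by (intro mult_left_mono) simp_all
  ultimately have "Z1 - 2 * \<gamma> * R1 + \<gamma> * L * Y1 + 2 * \<kappa> * D1
      \<le> Z0 - 2 * \<gamma> * R0 + \<gamma> * L * Y0 + 2 * \<kappa> * D0 - (1 - 4 * \<kappa>) * D1"
    by (simp add: algebra_simps)
  then show ?thesis
    unfolding energy_def Z0_def Z1_def D0_def D1_def Y0_def Y1_def R0_def R1_def .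
qed

lemma energy_lower_bound:
  assumes "ab \<in> A1 xb" "zb = xb + \<gamma> *\<^sub>R ab"
  shows "(1 - \<gamma> * L) * (norm (z (Suc k) - zb))\<^sup>2 \<le> energy zb xb k"
proof -
  define Z D Y W R where "Z = (norm (z (Suc k) - zb))\<^sup>2" and "D = (norm (z (Suc k) - z k))\<^sup>2"
    and "Y = (norm (y (Suc k) - y k))\<^sup>2" and "W = (norm (y (Suc k) - xb))\<^sup>2"
    and "R = inner (y (Suc k) - xb) (B (y (Suc k)) - B (y k))"
  have "\<gamma> * L * W \<le> \<gamma> * L * (Z + D)"
    using y_dist_sq_le[OF assms, of k] \<gamma>_pos L_pos unfolding W_def Z_def D_def
    by (intro mult_left_mono) simp_all
  then have 1: "\<gamma> * L * W \<le> \<gamma> * L * Z + \<gamma> * L * D"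
    by (simp add: distrib_left)
  have "2 * \<gamma> * R \<le> 2 * \<gamma> * (L / 2 * (W + Y))"
    using lipschitz_inner_le[OF B_lipschitz less_imp_le[OF L_pos]] \<gamma>_pos unfolding R_def W_def Y_def
    by (intro mult_left_mono) simp_all
  then have 2: "2 * (\<gamma> * R) \<le> \<gamma> * L * W + \<gamma> * L * Y"
    by (simp add: algebra_simps)
  have 3: "\<gamma> * L * D \<le> 2 * (\<kappa> * D)"
    using \<kappa>_bounds(2) mult_right_mono[of "\<gamma> * L" "2 * \<kappa>" D] unfolding D_def by simp
  have "energy zb xb k = Z - 2 * (\<gamma> * R) + \<gamma> * L * Y + 2 * (\<kappa> * D)"
    unfolding energy_def Z_def D_def Y_def R_def by (simp add: mult.assoc)
  moreover have "(1 - \<gamma> * L) * Z = Z - \<gamma> * L * Z"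
    by (simp add: left_diff_distrib)
  ultimately show ?thesis
    using 1 2 3 unfolding Z_def by linarith
qed

lemma energy_decseq:
  assumes "ab \<in> A1 xb" "bb \<in> A2 xb" "ab + bb + B xb + C xb = 0" "zb = xb + \<gamma> *\<^sub>R ab"
  shows "decseq (energy zb xb)"
proof (rule decseq_SucI)
  fix k
  have "0 \<le> (1 - 4 * \<kappa>) * (norm (z (Suc (Suc k)) - z (Suc k)))\<^sup>2"
    using \<kappa>_bounds(1) by simp
  then show "energy zb xb (Suc k) \<le> energy zb xb k"
    using energy_step[OF assms, of k] by linarith
qed

lemma energy_convergent:
  assumes "ab \<in> A1 xb" "bb \<in> A2 xb" "ab + bb + B xb + C xb = 0" "zb = xb + \<gamma> *\<^sub>R ab"
  shows "convergent (energy zb xb)"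
proof -
  have "0 \<le> energy zb xb k" for k
  proof -
    have "0 \<le> (1 - \<gamma> * L) * (norm (z (Suc k) - zb))\<^sup>2"
      using \<kappa>_bounds(1,2) by (intro mult_nonneg_nonneg) simp_all
    then show ?thesis
      using energy_lower_bound[OF assms(1,4), of k] by linarith
  qed
  then obtain l where "energy zb xb \<longlonglongrightarrow> l"
    using decseq_convergent[OF energy_decseq[OF assms], of 0] by blast
  then show ?thesis
    by (auto simp: convergent_def)
qed

lemma dz_tendsto_zero: "(\<lambda>k. z (Suc k) - z k) \<longlonglongrightarrow> 0"
proof -
  obtain xb ab bb where sol: "ab \<in> A1 xb" "bb \<in> A2 xb" "ab + bb + B xb + C xb = 0"
    by (rule solution_exists)
  define zb where "zb = xb + \<gamma> *\<^sub>R ab"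
  note fixed = sol zb_def
  define e where "e = energy zb xb"
  obtain l where l: "e \<longlonglongrightarrow> l"
    using energy_convergent[OF fixed] unfolding e_def by (auto simp: convergent_def)
  have "(\<lambda>k. e k - e (Suc k)) \<longlonglongrightarrow> l - l"
    using tendsto_diff[OF l LIMSEQ_Suc[OF l]] .
  then have lim: "(\<lambda>k. (e k - e (Suc k)) / (1 - 4 * \<kappa>)) \<longlonglongrightarrow> 0"
    by (intro tendsto_divide_zero) simp
  have bound: "(norm (z (Suc (Suc k)) - z (Suc k)))\<^sup>2 \<le> (e k - e (Suc k)) / (1 - 4 * \<kappa>)" for k
    using energy_step[OF fixed, of k] \<kappa>_bounds(1) unfolding e_def
    by (simp add: pos_le_divide_eq mult.commute)
  have "(\<lambda>k. z (Suc (Suc k)) - z (Suc k)) \<longlonglongrightarrow> 0"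
    using tendsto_zero_if_norm_sq_le[OF bound lim] .
  then show ?thesis
    by (rule LIMSEQ_imp_Suc)
qed

lemma z_bounded: "bounded (range z)"
proof -
  obtain xb ab bb where sol: "ab \<in> A1 xb" "bb \<in> A2 xb" "ab + bb + B xb + C xb = 0"
    by (rule solution_exists)
  define zb where "zb = xb + \<gamma> *\<^sub>R ab"
  note fixed = sol zb_def
  have "0 < 1 - \<gamma> * L"
    using \<kappa>_bounds(1,2) by linarith
  have "(1 - \<gamma> * L) * (norm (z (Suc k) - zb))\<^sup>2 \<le> energy zb xb 0" for k
    using energy_lower_bound[OF fixed(1,4), of k] decseqD[OF energy_decseq[OF fixed] le0, of k] by linarith
  then have "norm (z (Suc k) - zb) \<le> sqrt (energy zb xb 0 / (1 - \<gamma> * L))" for k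
    using \<open>0 < 1 - \<gamma> * L\<close> by (intro real_le_rsqrt) (simp add: pos_le_divide_eq mult.commute)
  then have "norm (z (Suc k)) \<le> norm zb + sqrt (energy zb xb 0 / (1 - \<gamma> * L))" for k
    using norm_triangle_sub[of "z (Suc k)" zb] by (meson add_left_mono order_trans)
  then have "bounded (range (\<lambda>k. z (Suc k)))"
    unfolding bounded_iff by blast
  then show ?thesis
    by (rule bounded_range_if_bounded_Suc)
qed

lemma x_bounded: "bounded (range (\<lambda>k. x (Suc k)))"
proof -
  obtain xb ab bb where "ab \<in> A1 xb"
    using solution_exists by blast
  obtain M where M: "\<And>k. norm (z k) \<le> M"
    using z_bounded by (auto simp: bounded_iff)
  have "norm (x (Suc k)) \<le> norm xb + M + norm (xb + \<gamma> *\<^sub>R ab)" for k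
    using x_dist_le[OF \<open>ab \<in> A1 xb\<close> refl, of k] M[of k] norm_triangle_ineq4[of "z k" "xb + \<gamma> *\<^sub>R ab"]
      norm_triangle_sub[of "x (Suc k)" xb]
    by linarith
  then show ?thesis
    unfolding bounded_iff by blast
qed

lemma y_bounded: "bounded (range (\<lambda>k. y (Suc k)))"
proof -
  have "bounded (range (\<lambda>k. x (Suc k) + (z (Suc k) - z k)))"
    using bounded_plus_comp[OF x_bounded convergent_imp_bounded[OF dz_tendsto_zero]] .
  moreover have "x (Suc k) + (z (Suc k) - z k) = y (Suc k)" for k
    using z_Suc[of k] by (simp add: algebra_simps)
  ultimately show ?thesis
    by simp
qed

lemma a1_bounded: "bounded (range a1)"
proof -
  have "bounded (range (\<lambda>k. (1 / \<gamma>) *\<^sub>R (z k - x (Suc k))))"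
    using bounded_scaleR_comp[OF bounded_minus_comp[OF z_bounded x_bounded]] .
  then show ?thesis
    unfolding a1_def .
qed

lemma y_step_tendsto_zero: "(\<lambda>k. y (Suc k) - y k) \<longlonglongrightarrow> 0"
proof -
  have "\<forall>\<^sub>F k in sequentially.
      norm (y (Suc (Suc k)) - y (Suc k)) \<le> norm (z (Suc (Suc k)) - z (Suc k)) + norm (z (Suc k) - z k)"
    using y_step_le by simp
  moreover have "(\<lambda>k. norm (z (Suc (Suc k)) - z (Suc k)) + norm (z (Suc k) - z k)) \<longlonglongrightarrow> 0"
    using tendsto_add[OF tendsto_norm_zero[OF LIMSEQ_Suc[OF dz_tendsto_zero]] tendsto_norm_zero[OF dz_tendsto_zero]]
    by simp
  ultimately have "(\<lambda>k. y (Suc (Suc k)) - y (Suc k)) \<longlonglongrightarrow> 0"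
    by (rule Lim_null_comparison)
  then show ?thesis
    by (rule LIMSEQ_imp_Suc)
qed

lemma z_dist_convergent:
  assumes "zb \<in> Fix"
  shows "convergent (\<lambda>k. norm (z k - zb))"
proof -
  obtain xb ab bb where fixed: "ab \<in> A1 xb" "bb \<in> A2 xb" "ab + bb + B xb + C xb = 0" "zb = xb + \<gamma> *\<^sub>R ab"
    using assms by (rule FixE)
  obtain l where l: "energy zb xb \<longlonglongrightarrow> l"
    using energy_convergent[OF fixed] by (auto simp: convergent_def)
  have "bounded (range (\<lambda>k. y (Suc k) - xb))"
    using bounded_minus_comp[OF y_bounded, of "\<lambda>_. xb"] by simp
  then have R: "(\<lambda>k. inner (B (y (Suc k)) - B (y k)) (y (Suc k) - xb)) \<longlonglongrightarrow> 0"
    by (rule tendsto_inner_zero_bounded[OF lipschitz_op_tendsto_diff[OF B_lipschitz y_step_tendsto_zero]])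
  have Y: "(\<lambda>k. (norm (y (Suc k) - y k))\<^sup>2) \<longlonglongrightarrow> 0" and D: "(\<lambda>k. (norm (z (Suc k) - z k))\<^sup>2) \<longlonglongrightarrow> 0"
    using tendsto_power[OF tendsto_norm_zero[OF y_step_tendsto_zero], of 2]
      tendsto_power[OF tendsto_norm_zero[OF dz_tendsto_zero], of 2] by simp_all
  have "(\<lambda>k. energy zb xb k + 2 * \<gamma> * inner (B (y (Suc k)) - B (y k)) (y (Suc k) - xb)
      - \<gamma> * L * (norm (y (Suc k) - y k))\<^sup>2 - 2 * \<kappa> * (norm (z (Suc k) - z k))\<^sup>2)
      \<longlonglongrightarrow> l + 2 * \<gamma> * 0 - \<gamma> * L * 0 - 2 * \<kappa> * 0"
    by (intro tendsto_diff tendsto_add tendsto_mult tendsto_const l R Y D)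
  moreover have "energy zb xb k + 2 * \<gamma> * inner (B (y (Suc k)) - B (y k)) (y (Suc k) - xb)
      - \<gamma> * L * (norm (y (Suc k) - y k))\<^sup>2 - 2 * \<kappa> * (norm (z (Suc k) - z k))\<^sup>2
      = (norm (z (Suc k) - zb))\<^sup>2" for k
    unfolding energy_def by (simp add: inner_commute)
  ultimately have "(\<lambda>k. (norm (z (Suc k) - zb))\<^sup>2) \<longlonglongrightarrow> l"
    by simp
  then have "(\<lambda>k. norm (z (Suc k) - zb)) \<longlonglongrightarrow> sqrt l"
    using tendsto_real_sqrt by fastforce
  then have "(\<lambda>k. norm (z k - zb)) \<longlonglongrightarrow> sqrt l"
    by (rule LIMSEQ_imp_Suc)
  then show ?thesis
    unfolding convergent_def by blast
qed

lemma residual_tendsto_zero: "(\<lambda>n. a1 n + a2 n + B (y (Suc n)) + C (y (Suc n))) \<longlonglongrightarrow> 0"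
proof -
  \<comment> \<open>The computation is done at \<open>Suc n\<close>, where \<open>w\<close> does not involve \<open>y_minus1\<close>.\<close>
  define dB dC where "dB n = B (y (Suc n)) - B (y n)" and "dC n = C (y (Suc n)) - C (y n)" for n
  have eq: "\<gamma> *\<^sub>R (a1 (Suc n) + a2 (Suc n) + B (y (Suc (Suc n))) + C (y (Suc (Suc n))))
      = - (z (Suc (Suc n)) - z (Suc n)) + \<gamma> *\<^sub>R (dB (Suc n) - dB n + dC (Suc n))" for n
  proof -
    have "\<gamma> *\<^sub>R a1 (Suc n) = z (Suc n) - x (Suc (Suc n))" "\<gamma> *\<^sub>R a2 (Suc n) = w (Suc n) - y (Suc (Suc n))"
      unfolding a1_def a2_def using \<gamma>_pos by simp_all
    then have "\<gamma> *\<^sub>R (a1 (Suc n) + a2 (Suc n) + B (y (Suc (Suc n))) + C (y (Suc (Suc n))))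
        = (z (Suc n) - x (Suc (Suc n))) + (w (Suc n) - y (Suc (Suc n)))
          + \<gamma> *\<^sub>R B (y (Suc (Suc n))) + \<gamma> *\<^sub>R C (y (Suc (Suc n)))"
      by (simp only: scaleR_add_right)
    also have "\<dots> = - (z (Suc (Suc n)) - z (Suc n)) + \<gamma> *\<^sub>R (dB (Suc n) - dB n + dC (Suc n))"
      unfolding w_def dB_def dC_def z_Suc[of "Suc n"] by (simp add: algebra_simps scaleR_2 flip: scaleR_scaleR)
    finally show ?thesis .
  qed
  have dB: "dB \<longlonglongrightarrow> 0" and dC: "dC \<longlonglongrightarrow> 0"
    unfolding dB_def dC_def
    using lipschitz_op_tendsto_diff[OF B_lipschitz y_step_tendsto_zero]
      lipschitz_op_tendsto_diff[OF C_lipschitz y_step_tendsto_zero] by simp_all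
  have "(\<lambda>n. - (z (Suc (Suc n)) - z (Suc n)) + \<gamma> *\<^sub>R (dB (Suc n) - dB n + dC (Suc n))) \<longlonglongrightarrow> - 0 + \<gamma> *\<^sub>R (0 - 0 + 0)"
    using LIMSEQ_Suc[OF dz_tendsto_zero] LIMSEQ_Suc[OF dB] dB LIMSEQ_Suc[OF dC]
    by (intro tendsto_add tendsto_minus tendsto_scaleR tendsto_diff tendsto_const)
  then have "(\<lambda>n. (1 / \<gamma>) *\<^sub>R (\<gamma> *\<^sub>R (a1 (Suc n) + a2 (Suc n) + B (y (Suc (Suc n))) + C (y (Suc (Suc n))))))
      \<longlonglongrightarrow> (1 / \<gamma>) *\<^sub>R 0"
    unfolding eq by (intro tendsto_scaleR tendsto_const) simp
  then have "(\<lambda>n. a1 (Suc n) + a2 (Suc n) + B (y (Suc (Suc n))) + C (y (Suc (Suc n)))) \<longlonglongrightarrow> 0"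
    using \<gamma>_pos by simp
  then show ?thesis
    by (rule LIMSEQ_imp_Suc)
qed

lemma weak_cluster_point:
  assumes "strict_mono r" "weakly_converges (z \<circ> r) zs"
  shows "zs \<in> Fix"
    and "\<exists>R. strict_mono R \<and> weakly_converges (\<lambda>k. x (Suc (r (R k)))) (resolvent \<gamma> A1 zs)"
proof -
  have "bounded (range (\<lambda>k. x (Suc (r k))))" "bounded (range (\<lambda>k. a1 (r k)))"
    using x_bounded a1_bounded by (auto intro: bounded_subset)
  then obtain R xs us where "strict_mono R" and wX: "weakly_converges ((\<lambda>k. x (Suc (r k))) \<circ> R) xs"
    and wU: "weakly_converges ((\<lambda>k. a1 (r k)) \<circ> R) us"
    using bounded_imp_weakly_convergent_subseq2 by blast
  have "strict_mono (r \<circ> R)"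
    using assms(1) \<open>strict_mono R\<close> by (rule strict_mono_o)
  define X U Y V where "X k = x (Suc (r (R k)))" and "U k = a1 (r (R k))" and "Y k = y (Suc (r (R k)))"
    and "V k = a2 (r (R k)) + (B (Y k) + C (Y k))" for k
  have wX: "weakly_converges X xs" and wU: "weakly_converges U us"
    using wX wU unfolding X_def U_def by (simp_all add: o_def)
  have "(\<lambda>k. X k - Y k) \<longlonglongrightarrow> 0"
    using tendsto_minus[OF LIMSEQ_subseq_LIMSEQ[OF dz_tendsto_zero \<open>strict_mono (r \<circ> R)\<close>]]
    unfolding X_def Y_def by (simp add: o_def z_Suc)
  moreover have "(\<lambda>k. U k + V k) \<longlonglongrightarrow> 0"
    using LIMSEQ_subseq_LIMSEQ[OF residual_tendsto_zero \<open>strict_mono (r \<circ> R)\<close>]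
    unfolding U_def V_def Y_def by (simp add: o_def add.assoc)
  moreover have "bounded (range U)" "bounded (range Y)"
    unfolding U_def Y_def using a1_bounded y_bounded by (auto intro: bounded_subset)
  ultimately have us: "us \<in> A1 xs" and bs: "- us - (B xs + C xs) \<in> A2 xs"
    using maximal_monotone_pair_weak_strong_limit[OF A1 A2
        monotone_fun_add[OF B_monotone cocoercive_imp_monotone_fun[OF less_imp_le[OF \<beta>_pos] C_cocoercive]]
        lipschitz_op_add[OF B_lipschitz C_lipschitz], of U X V Y xs us]
      a1_mem a2_mem wX wU unfolding U_def X_def V_def Y_def by auto
  have "weakly_converges (\<lambda>k. X k + \<gamma> *\<^sub>R U k) (xs + \<gamma> *\<^sub>R us)"
    by (intro weakly_converges_add weakly_converges_scaleR wX wU)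
  moreover have "(\<lambda>k. X k + \<gamma> *\<^sub>R U k) = z \<circ> r \<circ> R"
    unfolding X_def U_def by (auto simp: z_eq)
  moreover have "weakly_converges (z \<circ> r \<circ> R) zs"
    using weakly_converges_subseq[OF assms(2) \<open>strict_mono R\<close>] by (simp add: o_assoc)
  ultimately have zs: "zs = xs + \<gamma> *\<^sub>R us"
    using weakly_converges_unique by metis
  have "us + (- us - (B xs + C xs)) + B xs + C xs = 0"
    by simp
  then show "zs \<in> Fix"
    unfolding Fix_def zs using us bs by blast
  have "resolvent \<gamma> A1 zs = xs"
    using resolvent_eqI[OF maximal_monotone_imp_monotone_op[OF A1] \<gamma>_pos us zs] .
  then show "\<exists>R. strict_mono R \<and> weakly_converges (\<lambda>k. x (Suc (r (R k)))) (resolvent \<gamma> A1 zs)"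
    using \<open>strict_mono R\<close> wX unfolding X_def by blast
qed

theorem convergence:
  "\<exists>zbar xbar. weakly_converges z zbar \<and> weakly_converges x xbar \<and>
     weakly_converges y xbar \<and> xbar = resolvent \<gamma> A1 zbar \<and> xbar \<in> zer (op_sum4 A1 A2 B C)"
proof -
  have "\<exists>zbar\<in>Fix. weakly_converges z zbar"
  proof (rule Opial_weak_convergence[OF z_bounded])
    show "convergent (\<lambda>k. norm (z k - p))" if "p \<in> Fix" for p
      using z_dist_convergent[OF that] .
    show "p \<in> Fix" if "strict_mono r" "weakly_converges (z \<circ> r) p" for r p
      using weak_cluster_point(1)[OF that] .
  qed
  then obtain zbar where "zbar \<in> Fix" and wz: "weakly_converges z zbar"
    by blast
  define xbar where "xbar = resolvent \<gamma> A1 zbar"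
  have "weakly_converges (\<lambda>k. x (Suc k)) xbar"
  proof (rule weakly_converges_if_subseqs)
    fix r :: "nat \<Rightarrow> nat"
    assume "strict_mono r"
    then obtain R where "strict_mono R" "weakly_converges (\<lambda>k. x (Suc (r (R k)))) xbar"
      using weak_cluster_point(2)[OF _ weakly_converges_subseq[OF wz]] unfolding xbar_def by blast
    then show "\<exists>R. strict_mono R \<and> weakly_converges ((\<lambda>k. x (Suc k)) \<circ> r \<circ> R) xbar"
      by (auto simp: o_def)
  qed
  moreover have "(\<lambda>k. y (Suc k) - x (Suc k)) \<longlonglongrightarrow> 0"
    using dz_tendsto_zero by (simp add: z_Suc)
  ultimately have "weakly_converges (\<lambda>k. y (Suc k)) xbar"
    by (rule weakly_converges_diff_tendsto_zero)
  then show ?thesis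
    using wz weakly_converges_Suc[OF \<open>weakly_converges (\<lambda>k. x (Suc k)) xbar\<close>] weakly_converges_Suc
      resolvent_Fix[OF \<open>zbar \<in> Fix\<close>] unfolding xbar_def by blast
qed

end

theorem theorem3p1:
  fixes A1 A2 :: "'a::{real_inner, complete_space} \<Rightarrow> 'a set"
    and B C :: "'a \<Rightarrow> 'a"
    and L \<beta> \<gamma> :: real
    and x y z :: "nat \<Rightarrow> 'a"
    and y_minus1 :: 'a
  assumes "maximal_monotone A1" and "maximal_monotone A2"
    and "monotone_fun B" and "L > 0" and "lipschitz_op L B"
    and "\<beta> > 0" and "cocoercive \<beta> C"
    and "zer (op_sum4 A1 A2 B C) \<noteq> {}"
    and "0 < \<gamma>" and "\<gamma> < \<beta> / (2 * (1 + 4 * \<beta> * L))"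
    and "\<And>n. x (Suc n) = resolvent \<gamma> A1 (z n)"
    and "\<And>n. y (Suc n) = resolvent \<gamma> A2
            (2 *\<^sub>R x (Suc n) - z n - (2 * \<gamma>) *\<^sub>R B (y n)
             + \<gamma> *\<^sub>R B (if n = 0 then y_minus1 else y (n - 1)) - \<gamma> *\<^sub>R C (y n))"
    and "\<And>n. z (Suc n) = z n + y (Suc n) - x (Suc n)"
  shows "\<exists>zbar xbar. weakly_converges z zbar \<and> weakly_converges x xbar \<and>
           weakly_converges y xbar \<and> xbar = resolvent \<gamma> A1 zbar \<and>
           xbar \<in> zer (op_sum4 A1 A2 B C)"
proof -
  interpret splitting_iteration A1 A2 B C L \<beta> \<gamma> x y z y_minus1
    by (rule splitting_iteration.intro[OF assms])
  show ?thesis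
    by (rule convergence)
qed

end
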